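(* Assume (A1), (A2) and (A3), let $(\mu_N)_N$ be an approximating sequence for $\mu$, and fix $\eta>0$ and $\tilde u\in\mathcal U$. Then $\mathcal J_\mu^\eta$ has a unique minimizer $\bar u$ on $\mathcal U$, and any sequence $(u_N^* )_N$ with $u_N^*\in\arg\min_{\mathcal U}\mathcal J_{\mu_N}^\eta$ converges to $\bar u$ in the $L^2([0,T],\mathbb{R}^m)$-norm.
   Context: Fix integers $n,m,p\ge1$, $T>0$, $\alpha>0$, $\psi\in C^0([0,T],\mathbb{R}^m)$. Let $\mu=\mathcal N(\theta_{\rm prior},\Sigma_{\rm prior})$ be a Gaussian probability measure on $\mathbb{R}^p$ with $\Sigma_{\rm prior}$ symmetric positive definite. Let $\mathcal U=\{u\in L^\infty([0,T],\mathbb{R}^m):\max_{1\le i\le m}\|u_i\|_{L^\infty}\le1\}$. For each $\theta\in\mathbb{R}^p$ let $f_0^\theta,\dots,f_m^\theta$ be vector fields on $\mathbb{R}^n$, write $f_u^\theta=f_0^\theta+\sum_{i=1}^m u_if_i^\theta$, and let $x_u^\theta$ be the solution of $\dot x^\theta=f_u^\theta(x^\theta)$, $x^\theta(0)=0$. For a probability measure $\nu$ on $\mathbb{R}^p$, a fixed $\tilde u\in\mathcal U$ and $\eta\ge0$ define $$\mathcal J_\nu^\eta(u)=-\langle\psi,u\rangle_{L^2}+\alpha\,\mathbb{E}_\nu\Big[\int_0^T|x_u^\theta(t)|^2dt\Big]+\frac\eta2\|u-\tilde u\|_{L^2}^2 .$$ Assumption (A1): $(\theta,x)\mapsto f_i^\theta(x)$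 is smooth on $\mathbb{R}^p\times\mathbb{R}^n$ for all $0\le i\le m$, and for each $\theta$ there is $c^\theta$ with $\sup_{0\le i\le m}|f_i^\theta(x)|\le c^\theta(1+|x|)$. Assumption (A2): there exist $a\in L^2(\mathbb{R}^p,\mu)\cap L^\infty_{loc}(\mathbb{R}^p)$ and $b\in L^\infty_{loc}(\mathbb{R}^p)$ with $|x_u^\theta(t)|\le a(\theta)$ and $|\partial_{\theta_i}x_u^\theta(t)|\le b(\theta)$ for all $1\le i\le p$, $u\in\mathcal U$, $t\in[0,T]$, $\theta\in\mathbb{R}^p$. Assumption (A3): the map $u\mapsto\mathbb{E}_\mu\big[\int_0^T|x_u^\theta(t)|^2dt\big]$ is convex on $\mathcal U$. An approximating sequence for $\mu$ is a sequence $(\mu_N)_{N\ge1}$ of probability measures on $\mathbb{R}^p$, each supported on finitely many points of the closed ball $\bar B(0,N)$, with $\mu_N\to\mu$ in the $1$-Wasserstein topology, and such that for every $\eta\ge0$, $\tilde u\in\mathcal U$ and every sequence $(u_N)$ in $\mathcal U$, $\mathcal J_{\mu_N}^\eta(u_N)-\mathcal J_\mu^\eta(u_N)\to0$. *)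

theory Defs
  imports "HOL-Analysis.Analysis" "HOL-Probability.Probability"
begin

fun Ck :: "nat \<Rightarrow> ('a::euclidean_space \<Rightarrow> 'b::real_normed_vector) \<Rightarrow> bool" where
  "Ck 0 g = continuous_on UNIV g"
| "Ck (Suc k) g = ((\<forall>z. g differentiable (at z)) \<and>
      (\<forall>e\<in>Basis. Ck k (\<lambda>z. frechet_derivative g (at z) e)))"

definition smooth :: "('a::euclidean_space \<Rightarrow> 'b::real_normed_vector) \<Rightarrow> bool" where
  "smooth g \<longleftrightarrow> (\<forall>k. Ck k g)"

definition gaussian_measure :: "real^'p \<Rightarrow> real^'p^'p \<Rightarrow> (real^'p) measure" where
  "gaussian_measure m S = density lborel (\<lambda>\<theta>. ennreal
     ((2 * pi) powr (- real CARD('p) / 2) * (det S) powr (-1/2) *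
      exp (- ((\<theta> - m) \<bullet> (matrix_inv S *v (\<theta> - m))) / 2)))"

definition couplings :: "'a::euclidean_space measure \<Rightarrow> 'a measure \<Rightarrow> ('a \<times> 'a) measure set" where
  "couplings \<mu> \<nu> = {\<pi>. prob_space \<pi> \<and> sets \<pi> = sets borel \<and>
      distr \<pi> borel fst = \<mu> \<and> distr \<pi> borel snd = \<nu>}"

definition W1 :: "'a::euclidean_space measure \<Rightarrow> 'a measure \<Rightarrow> ennreal" where
  "W1 \<mu> \<nu> = (INF \<pi> \<in> couplings \<mu> \<nu>. \<integral>\<^sup>+ z. ennreal (dist (fst z) (snd z)) \<partial>\<pi>)"

text \<open>Admissible controls: measurable on [0,T], each component bounded by 1 on [0,T]
  (pointwise representatives of elements of the L^infinity unit ball).\<close>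
definition Uad :: "real \<Rightarrow> (real \<Rightarrow> real^'m) set" where
  "Uad T = {u. u \<in> borel_measurable (lebesgue_on {0..T}) \<and>
              (\<forall>t\<in>{0..T}. \<forall>i. \<bar>u t $ i\<bar> \<le> 1)}"

definition fctrl :: "(real^'p \<Rightarrow> real^'n \<Rightarrow> real^'n) \<Rightarrow> ('m \<Rightarrow> real^'p \<Rightarrow> real^'n \<Rightarrow> real^'n)
      \<Rightarrow> real^'p \<Rightarrow> real^'m \<Rightarrow> real^'n \<Rightarrow> real^'n" where
  "fctrl f0 f \<theta> w x = f0 \<theta> x + (\<Sum>i\<in>UNIV. (w $ i) *\<^sub>R f i \<theta> x)"

definition traj :: "real \<Rightarrow> (real^'p \<Rightarrow> real^'n \<Rightarrow> real^'n) \<Rightarrow> ('m \<Rightarrow> real^'p \<Rightarrow> real^'n \<Rightarrow> real^'n)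
      \<Rightarrow> (real \<Rightarrow> real^'m) \<Rightarrow> real^'p \<Rightarrow> real \<Rightarrow> real^'n" where
  "traj T f0 f u \<theta> = (THE x. continuous_on {0..T} x \<and>
      (\<forall>t\<in>{0..T}. ((\<lambda>s. fctrl f0 f \<theta> (u s) (x s)) has_integral x t) {0..t}) \<and>
      (\<forall>t. t \<notin> {0..T} \<longrightarrow> x t = 0))"

definition Ecost :: "real \<Rightarrow> (real^'p \<Rightarrow> real^'n \<Rightarrow> real^'n) \<Rightarrow> ('m \<Rightarrow> real^'p \<Rightarrow> real^'n \<Rightarrow> real^'n)
      \<Rightarrow> (real^'p) measure \<Rightarrow> (real \<Rightarrow> real^'m) \<Rightarrow> real" where
  "Ecost T f0 f \<nu> u = (\<integral>\<theta>. integral {0..T} (\<lambda>t. (norm (traj T f0 f u \<theta> t))\<^sup>2) \<partial>\<nu>)"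

definition Jfun :: "real \<Rightarrow> real \<Rightarrow> (real \<Rightarrow> real^'m) \<Rightarrow> (real^'p \<Rightarrow> real^'n \<Rightarrow> real^'n)
      \<Rightarrow> ('m \<Rightarrow> real^'p \<Rightarrow> real^'n \<Rightarrow> real^'n) \<Rightarrow> (real \<Rightarrow> real^'m) \<Rightarrow> real
      \<Rightarrow> (real^'p) measure \<Rightarrow> (real \<Rightarrow> real^'m) \<Rightarrow> real" where
  "Jfun T \<alpha> \<psi> f0 f ut \<eta> \<nu> u =
     - integral {0..T} (\<lambda>t. \<psi> t \<bullet> u t) + \<alpha> * Ecost T f0 f \<nu> u
     + \<eta> / 2 * integral {0..T} (\<lambda>t. (norm (u t - ut t))\<^sup>2)"

definition approx_seq :: "real \<Rightarrow> real \<Rightarrow> (real \<Rightarrow> real^'m) \<Rightarrow> (real^'p \<Rightarrow> real^'n \<Rightarrow> real^'n)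
      \<Rightarrow> ('m \<Rightarrow> real^'p \<Rightarrow> real^'n \<Rightarrow> real^'n) \<Rightarrow> (real^'p) measure
      \<Rightarrow> (nat \<Rightarrow> (real^'p) measure) \<Rightarrow> bool" where
  "approx_seq T \<alpha> \<psi> f0 f \<mu> \<mu>N \<longleftrightarrow>
     (\<forall>N\<ge>1. prob_space (\<mu>N N) \<and> sets (\<mu>N N) = sets borel \<and>
        (\<exists>S. finite S \<and> S \<subseteq> cball 0 (real N) \<and> emeasure (\<mu>N N) (UNIV - S) = 0)) \<and>
     ((\<lambda>N. W1 (\<mu>N N) \<mu>) \<longlonglongrightarrow> 0) \<and>
     (\<forall>\<eta>\<ge>0. \<forall>ut\<in>Uad T. \<forall>uN. (\<forall>N. uN N \<in> Uad T) \<longrightarrow>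
        ((\<lambda>N. Jfun T \<alpha> \<psi> f0 f ut \<eta> (\<mu>N N) (uN N) - Jfun T \<alpha> \<psi> f0 f ut \<eta> \<mu> (uN N))
           \<longlonglongrightarrow> 0))"

definition is_minimizer :: "(real \<Rightarrow> real^'m) set \<Rightarrow> ((real \<Rightarrow> real^'m) \<Rightarrow> real)
      \<Rightarrow> (real \<Rightarrow> real^'m) \<Rightarrow> bool" where
  "is_minimizer U J u \<longleftrightarrow> u \<in> U \<and> (\<forall>v\<in>U. J u \<le> J v)"

end

theory Submission
  imports Defs
begin

text \<open>
  For each parameter \<open>\<theta>\<close> the control-affine system has a unique Caratheodory trajectory: Picard
  iteration solves the system truncated outside a ball which, by Gronwall's inequality, the
  solution never leaves. Gronwall's inequality also makes the trajectory depend Lipschitz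
  continuously on the control in \<open>L\<^sup>1\<close>, so with the bounds (A2) dominated convergence makes
  the expected state cost continuous along almost everywhere convergent controls. By (A3) and
  the Tikhonov term,
  \<open>J ((u + v) / 2) \<le> (J u + J v) / 2 - \<eta> / 8 \<parallel>u - v\<parallel>\<^sup>2\<close>,
  so minimizing sequences are Cauchy in \<open>L\<^sup>2\<close>; a subsequence converges almost everywhere to
  an admissible control, which is a minimizer. The same inequality gives uniqueness, and for a
  minimizer \<open>u\<^sub>N\<close> of \<open>J\<^sub>N = J\<^bsub>\<mu>\<^sub>N\<^esub>\<close> it bounds \<open>\<eta> / 8 \<parallel>u\<^sub>N - ubar\<parallel>\<^sup>2\<close> by half of
  \<open>(J\<^sub>N - J) ubar - (J\<^sub>N - J) u\<^sub>N\<close>, which tends to zero for an approximating sequence.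
\<close>

section \<open>Gronwall's inequality and Picard iteration\<close>

lemma gronwall_inequality:
  fixes \<phi> :: "real \<Rightarrow> real"
  assumes cont: "continuous_on {0..T} \<phi>" and K: "0 \<le> K"
    and le: "\<And>t. t \<in> {0..T} \<Longrightarrow> \<phi> t \<le> \<epsilon> + K * integral {0..t} \<phi>"
    and t: "t \<in> {0..T}"
  shows "\<phi> t \<le> \<epsilon> * exp (K * t)"
proof -
  define \<Phi> where "\<Phi> s = integral {0..s} \<phi>" for s
  define h where "h s = exp (- K * s) * (\<epsilon> + K * \<Phi> s)" for s
  have "continuous_on {0..T} \<Phi>"
    unfolding \<Phi>_def by (rule indefinite_integral_continuous_1[OF integrable_continuous_real[OF cont]])
  then have h_cont: "continuous_on {0..t} h"
    unfolding h_def using t by (intro continuous_intros) (auto elim: continuous_on_subset)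
  have "h t \<le> h 0"
  proof (rule DERIV_nonpos_imp_decreasing_open[OF _ _ h_cont])
    fix x assume x: "0 < x" "x < t"
    have "(\<Phi> has_vector_derivative \<phi> x) (at x within {0..T})"
      unfolding \<Phi>_def by (rule integral_has_vector_derivative[OF cont]) (use x t in auto)
    moreover have "at x within {0..T} = at x" using x t by (intro at_within_Icc_at) auto
    ultimately have \<Phi>_deriv: "(\<Phi> has_real_derivative \<phi> x) (at x)"
      by (simp add: has_real_derivative_iff_has_vector_derivative)
    have "(h has_real_derivative
        - K * exp (- K * x) * (\<epsilon> + K * \<Phi> x) + exp (- K * x) * (K * \<phi> x)) (at x)"
      unfolding h_def by (rule derivative_eq_intros \<Phi>_deriv refl | simp)+
    moreover have "- K * exp (- K * x) * (\<epsilon> + K * \<Phi> x) + exp (- K * x) * (K * \<phi> x)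
        = K * exp (- K * x) * (\<phi> x - (\<epsilon> + K * \<Phi> x))"
      by (simp add: algebra_simps)
    moreover have "K * exp (- K * x) * (\<phi> x - (\<epsilon> + K * \<Phi> x)) \<le> 0"
      using le[of x] x t K unfolding \<Phi>_def by (intro mult_nonneg_nonpos) auto
    ultimately show "\<exists>y. (h has_real_derivative y) (at x) \<and> y \<le> 0" by auto
  qed (use t in simp)
  then have "\<epsilon> + K * \<Phi> t \<le> \<epsilon> * exp (K * t)"
    by (simp add: h_def \<Phi>_def exp_minus field_simps)
  then show ?thesis using le[OF t] unfolding \<Phi>_def by linarith
qed

lemma has_integral_power_0:
  "0 \<le> t \<Longrightarrow> ((\<lambda>s. s ^ k) has_integral t ^ Suc k / Suc k) {0..t}"
proof -
  assume t: "0 \<le> t"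
  have "((\<lambda>s. s ^ k) has_integral t ^ Suc k / Suc k - 0 ^ Suc k / Suc k) {0..t}"
  proof (rule fundamental_theorem_of_calculus[OF t])
    fix x :: real
    have "((\<lambda>s. s ^ Suc k / Suc k) has_real_derivative x ^ k) (at x)"
      by (rule derivative_eq_intros refl | simp)+
    then show "((\<lambda>s. s ^ Suc k / Suc k) has_vector_derivative x ^ k) (at x within {0..t})"
      by (simp add: has_real_derivative_iff_has_vector_derivative has_vector_derivative_at_within)
  qed
  then show ?thesis by simp
qed

context
  fixes G :: "real \<Rightarrow> 'a::euclidean_space \<Rightarrow> 'a" and T L M :: real
  assumes T_nonneg: "0 \<le> T" and L_nonneg: "0 \<le> L"
    and integrable: "\<And>y. continuous_on {0..T} y \<Longrightarrow> (\<lambda>s. G s (y s)) integrable_on {0..T}"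
    and lipschitz: "\<And>s x y. s \<in> {0..T} \<Longrightarrow> norm (G s x - G s y) \<le> L * norm (x - y)"
    and bounded: "\<And>s x. s \<in> {0..T} \<Longrightarrow> norm (G s x) \<le> M"
begin

lemma integrable_on_initial_segment:
  "continuous_on {0..T} y \<Longrightarrow> t \<in> {0..T} \<Longrightarrow> (\<lambda>s. G s (y s)) integrable_on {0..t}"
  using integrable_on_subinterval[OF integrable] by auto

lemma picard_increment_bound:
  assumes x0: "x 0 = (\<lambda>t. 0)"
    and x_Suc: "\<And>k t. x (Suc k) t = integral {0..t} (\<lambda>s. G s (x k s))"
    and cont: "\<And>k. continuous_on {0..T} (x k)"
    and t: "t \<in> {0..T}"
  shows "norm (x (Suc k) t - x k t) \<le> M * L ^ k * t ^ Suc k / fact (Suc k)"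
  using t
proof (induction k arbitrary: t)
  case 0
  have "norm (integral {0..t} (\<lambda>s. G s 0)) \<le> integral {0..t} (\<lambda>s. M)"
    using 0 by (intro integral_norm_bound_integral integrable_on_initial_segment[of "\<lambda>s. 0", simplified])
      (auto intro: bounded)
  then show ?case using 0 by (simp add: x_Suc x0 mult.commute)
next
  case (Suc k)
  have "x (Suc (Suc k)) t - x (Suc k) t = integral {0..t} (\<lambda>s. G s (x (Suc k) s) - G s (x k s))"
    unfolding x_Suc[of "Suc k" t] x_Suc[of k t]
    by (intro integral_diff[symmetric] integrable_on_initial_segment cont Suc.prems)
  also have "norm \<dots> \<le> integral {0..t} (\<lambda>s. L * (M * L ^ k / fact (Suc k)) * s ^ Suc k)"
  proof (rule integral_norm_bound_integral)
    show "(\<lambda>s. G s (x (Suc k) s) - G s (x k s)) integrable_on {0..t}"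
      by (intro integrable_diff integrable_on_initial_segment cont Suc.prems)
    show "(\<lambda>s. L * (M * L ^ k / fact (Suc k)) * s ^ Suc k) integrable_on {0..t}"
      by (intro integrable_on_cmult_left[where 'b=real, simplified] integrable_continuous_interval continuous_intros)
    fix s assume s: "s \<in> {0..t}"
    with Suc.prems have "s \<in> {0..T}" by auto
    then have "norm (G s (x (Suc k) s) - G s (x k s)) \<le> L * norm (x (Suc k) s - x k s)"
      by (rule lipschitz)
    also have "\<dots> \<le> L * (M * L ^ k * s ^ Suc k / fact (Suc k))"
      using Suc.IH[OF \<open>s \<in> {0..T}\<close>] L_nonneg by (rule mult_left_mono)
    finally show "norm (G s (x (Suc k) s) - G s (x k s)) \<le> L * (M * L ^ k / fact (Suc k)) * s ^ Suc k"
      by simp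
  qed
  also have "\<dots> = L * (M * L ^ k / fact (Suc k)) * (t ^ Suc (Suc k) / Suc (Suc k))"
    using has_integral_power_0[of t "Suc k"] Suc.prems by (intro integral_unique has_integral_mult_right) auto
  also have "\<dots> = M * L ^ Suc k * t ^ Suc (Suc k) / fact (Suc (Suc k))"
    by (simp only: fact_Suc[of "Suc k"]) (simp add: field_simps)
  finally show ?case .
qed

lemma picard_iterates_uniform_limit:
  assumes x0: "x 0 = (\<lambda>t. 0)"
    and x_Suc: "\<And>k t. x (Suc k) t = integral {0..t} (\<lambda>s. G s (x k s))"
    and cont: "\<And>k. continuous_on {0..T} (x k)"
  shows "\<exists>X. uniform_limit {0..T} x X sequentially"
proof -
  define E where "E k = M * T * ((L * T) ^ k / fact k)" for k
  have M_nonneg: "0 \<le> M" using bounded[of 0 0] T_nonneg by (auto intro: order_trans[OF norm_ge_zero])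
  have "summable E"
    unfolding E_def by (intro summable_mult) (use summable_exp[of "L * T"] in \<open>simp add: field_simps\<close>)
  moreover have "norm (x (Suc k) t - x k t) \<le> E k" if "t \<in> {0..T}" for k t
  proof -
    have "norm (x (Suc k) t - x k t) \<le> M * L ^ k * t ^ Suc k / fact (Suc k)"
      by (rule picard_increment_bound[of x, OF x0 x_Suc cont that])
    also have "\<dots> \<le> M * L ^ k * T ^ Suc k / fact k"
      using that M_nonneg L_nonneg by (intro frac_le mult_left_mono power_mono fact_mono) auto
    also have "\<dots> = E k" by (simp add: E_def power_mult_distrib)
    finally show ?thesis .
  qed
  ultimately have "uniform_limit {0..T} (\<lambda>k t. \<Sum>i<k. x (Suc i) t - x i t)
      (\<lambda>t. \<Sum>i. x (Suc i) t - x i t) sequentially"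
    by (intro Weierstrass_m_test)
  moreover have "(\<lambda>k t. \<Sum>i<k. x (Suc i) t - x i t) = x"
    by (intro ext, subst sum_lessThan_telescope) (simp add: x0)
  ultimately show ?thesis by metis
qed

lemma integral_equation_of_picard_limit:
  assumes x_Suc: "\<And>k t. x (Suc k) t = integral {0..t} (\<lambda>s. G s (x k s))"
    and cont: "\<And>k. continuous_on {0..T} (x k)"
    and X: "uniform_limit {0..T} x X sequentially" and X_cont: "continuous_on {0..T} X"
    and t: "t \<in> {0..T}"
  shows "((\<lambda>s. G s (X s)) has_integral X t) {0..t}"
proof -
  have "(\<lambda>k. x (Suc k) t) \<longlonglongrightarrow> X t"
    using tendsto_uniform_limitI[OF X t] by (rule LIMSEQ_Suc)
  moreover have "(\<lambda>k. x (Suc k) t) \<longlonglongrightarrow> integral {0..t} (\<lambda>s. G s (X s))"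
    unfolding x_Suc
  proof (rule dominated_convergence(2))
    show "(\<lambda>s. G s (x k s)) integrable_on {0..t}" for k
      by (rule integrable_on_initial_segment[OF cont t])
    show "norm (G s (x k s)) \<le> M" if "s \<in> {0..t}" for k s
      using that t by (intro bounded) auto
    fix s assume "s \<in> {0..t}"
    with t have s: "s \<in> {0..T}" by auto
    have "(\<lambda>k. L * norm (x k s - X s)) \<longlonglongrightarrow> 0"
      using tendsto_uniform_limitI[OF X s] by (intro tendsto_mult_right_zero tendsto_norm_zero LIM_zero)
    then have "(\<lambda>k. G s (x k s) - G s (X s)) \<longlonglongrightarrow> 0"
      by (rule Lim_null_comparison[rotated]) (use lipschitz[OF s] in auto)
    then show "(\<lambda>k. G s (x k s)) \<longlonglongrightarrow> G s (X s)" by (rule LIM_zero_cancel)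
  qed (rule integrable_const_ivl)
  ultimately have "X t = integral {0..t} (\<lambda>s. G s (X s))" by (rule LIMSEQ_unique)
  then show ?thesis
    using integrable_on_initial_segment[OF X_cont t] by (simp add: has_integral_integral)
qed

lemma picard_solution_exists:
  "\<exists>x. continuous_on {0..T} x \<and> (\<forall>t\<in>{0..T}. ((\<lambda>s. G s (x s)) has_integral x t) {0..t})"
proof -
  define x where "x k = ((\<lambda>y t. integral {0..t} (\<lambda>s. G s (y s))) ^^ k) (\<lambda>t. 0)" for k
  have x_Suc: "x (Suc k) t = integral {0..t} (\<lambda>s. G s (x k s))" for k t
    by (simp add: x_def)
  have cont: "continuous_on {0..T} (x k)" for k
  proof (induction k)
    case (Suc k)
    show ?case
      unfolding x_Suc[abs_def] by (rule indefinite_integral_continuous_1[OF integrable[OF Suc.IH]])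
  qed (simp add: x_def)
  obtain X where X: "uniform_limit {0..T} x X sequentially"
    using picard_iterates_uniform_limit[of x, OF _ x_Suc cont] by (auto simp: x_def)
  have X_cont: "continuous_on {0..T} X"
    by (rule uniform_limit_theorem[OF _ X]) (auto intro: cont always_eventually)
  show ?thesis
    using integral_equation_of_picard_limit[of x, OF x_Suc cont X X_cont] X_cont by blast
qed

end

lemma integral_equation_stability:
  fixes x y :: "real \<Rightarrow> 'a::euclidean_space"
  assumes x: "continuous_on {0..T} x" and y: "continuous_on {0..T} y"
    and x_eq: "\<And>t. t \<in> {0..T} \<Longrightarrow> (F has_integral x t) {0..t}"
    and y_eq: "\<And>t. t \<in> {0..T} \<Longrightarrow> (F' has_integral y t) {0..t}"
    and m: "m integrable_on {0..T}" and m_nonneg: "\<And>s. s \<in> {0..T} \<Longrightarrow> 0 \<le> m s"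
    and L: "0 \<le> L"
    and le: "\<And>s. s \<in> {0..T} \<Longrightarrow> norm (F s - F' s) \<le> L * norm (x s - y s) + m s"
    and t: "t \<in> {0..T}"
  shows "norm (x t - y t) \<le> exp (L * T) * integral {0..T} m"
proof -
  have dist_cont: "continuous_on {0..T} (\<lambda>s. norm (x s - y s))" by (intro continuous_intros x y)
  have "norm (x r - y r) \<le> integral {0..T} m + L * integral {0..r} (\<lambda>s. norm (x s - y s))"
    if r: "r \<in> {0..T}" for r
  proof -
    have sub: "{0..r} \<subseteq> {0..T}" using r by auto
    have m_r: "m integrable_on {0..r}" using integrable_on_subinterval[OF m sub] .
    have d_r: "(\<lambda>s. norm (x s - y s)) integrable_on {0..r}"
      using integrable_continuous_interval[OF continuous_on_subset[OF dist_cont sub]] .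
    have "x r - y r = integral {0..r} (\<lambda>s. F s - F' s)"
      using has_integral_diff[OF x_eq[OF r] y_eq[OF r]] by (simp add: integral_unique)
    also have "norm \<dots> \<le> integral {0..r} (\<lambda>s. L * norm (x s - y s) + m s)"
      using x_eq[OF r] y_eq[OF r] m_r d_r sub
      by (intro integral_norm_bound_integral integrable_diff integrable_add le)
        (auto simp: integrable_on_cmult_left[where 'b=real, simplified])
    also have "\<dots> = L * integral {0..r} (\<lambda>s. norm (x s - y s)) + integral {0..r} m"
      using m_r d_r by (simp add: integral_add integrable_on_cmult_left[where 'b=real, simplified])
    also have "integral {0..r} m \<le> integral {0..T} m"
      using m_r m m_nonneg sub by (intro integral_subset_le) auto
    finally show ?thesis by simp
  qed
  then have "norm (x t - y t) \<le> integral {0..T} m * exp (L * t)"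
    by (rule gronwall_inequality[OF dist_cont L _ t])
  also have "\<dots> \<le> integral {0..T} m * exp (L * T)"
    using t L integral_nonneg[OF m m_nonneg] by (intro mult_left_mono) (auto intro: mult_left_mono)
  finally show ?thesis by (simp add: mult.commute)
qed

lemma integral_equation_growth_bound:
  fixes x :: "real \<Rightarrow> 'a::euclidean_space"
  assumes x: "continuous_on {0..T} x"
    and x_eq: "\<And>t. t \<in> {0..T} \<Longrightarrow> (F has_integral x t) {0..t}"
    and K: "0 \<le> K" and growth: "\<And>s. s \<in> {0..T} \<Longrightarrow> norm (F s) \<le> K * (1 + norm (x s))"
    and t: "t \<in> {0..T}"
  shows "norm (x t) \<le> exp (K * T)"
proof -
  have cont: "continuous_on {0..T} (\<lambda>s. 1 + norm (x s))" by (intro continuous_intros x)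
  have "1 + norm (x r) \<le> 1 + K * integral {0..r} (\<lambda>s. 1 + norm (x s))" if r: "r \<in> {0..T}" for r
  proof -
    have integrable: "(\<lambda>s. 1 + norm (x s)) integrable_on {0..r}"
      using r by (intro integrable_continuous_interval continuous_on_subset[OF cont]) auto
    have "norm (x r) = norm (integral {0..r} F)" using x_eq[OF r] by (simp add: integral_unique)
    also have "\<dots> \<le> integral {0..r} (\<lambda>s. K * (1 + norm (x s)))"
      using x_eq[OF r] integrable r growth
      by (intro integral_norm_bound_integral) (auto simp: integrable_on_cmult_left[where 'b=real, simplified])
    also have "\<dots> = K * integral {0..r} (\<lambda>s. 1 + norm (x s))" using integrable by simp
    finally show ?thesis by simp
  qed
  then have "1 + norm (x t) \<le> 1 * exp (K * t)" by (rule gronwall_inequality[OF cont K _ t])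
  moreover have "exp (K * t) \<le> exp (K * T)" using t K by (auto intro: mult_left_mono)
  ultimately show ?thesis by linarith
qed

section \<open>Trajectories of control-affine systems\<close>

lemma continuous_on_if_lipschitz_on_cballs:
  fixes g :: "'a::real_normed_vector \<Rightarrow> 'b::metric_space"
  assumes "\<And>R. \<exists>L. L-lipschitz_on (cball 0 R) g"
  shows "continuous_on UNIV g"
proof (rule continuous_at_imp_continuous_on, intro ballI)
  fix x :: 'a
  obtain L where "L-lipschitz_on (cball 0 (norm x + 1)) g" using assms by blast
  then have "continuous_on (cball 0 (norm x + 1)) g" by (rule lipschitz_on_continuous_on)
  then have "continuous_on (ball 0 (norm x + 1)) g" by (rule continuous_on_subset) auto
  then show "isCont g x" by (rule continuous_on_interior) (simp add: interior_open)
qed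

lemma measurable_bounded_imp_integrable_on:
  fixes g :: "real \<Rightarrow> 'b::euclidean_space"
  assumes "g \<in> borel_measurable (lebesgue_on {a..b})" "\<And>s. s \<in> {a..b} \<Longrightarrow> norm (g s) \<le> B"
  shows "g integrable_on {a..b}"
  by (rule measurable_bounded_by_integrable_imp_integrable[OF assms(1) integrable_const_ivl[of B] assms(2)])
    auto

lemma norm_le_CARD_if_components_le_1:
  fixes w :: "real^'m"
  assumes "\<And>i. \<bar>w $ i\<bar> \<le> 1"
  shows "norm w \<le> CARD('m)"
proof -
  have "norm w \<le> (\<Sum>i\<in>UNIV. \<bar>w $ i\<bar>)" by (rule norm_le_l1_cart)
  also have "\<dots> \<le> (\<Sum>i\<in>(UNIV::'m set). 1)" by (intro sum_mono assms)
  finally show ?thesis by simp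
qed

lemma Uad_measurable: "u \<in> Uad T \<Longrightarrow> u \<in> borel_measurable (lebesgue_on {0..T})"
  unfolding Uad_def by auto

lemma Uad_norm_le: "u \<in> Uad T \<Longrightarrow> t \<in> {0..T} \<Longrightarrow> norm (u t) \<le> CARD('m)"
  for u :: "real \<Rightarrow> real^'m"
  unfolding Uad_def by (auto intro: norm_le_CARD_if_components_le_1)

lemma Uad_norm_diff_le:
  "u \<in> Uad T \<Longrightarrow> v \<in> Uad T \<Longrightarrow> t \<in> {0..T} \<Longrightarrow> norm (u t - v t) \<le> 2 * CARD('m)"
  for u v :: "real \<Rightarrow> real^'m"
  using norm_triangle_ineq4[of "u t" "v t"] Uad_norm_le[of u T t] Uad_norm_le[of v T t] by linarith

lemma Uad_norm_diff_integrable: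
  fixes u v :: "real \<Rightarrow> real^'m"
  assumes u: "u \<in> Uad T" and v: "v \<in> Uad T"
  shows "(\<lambda>s. norm (u s - v s)) integrable_on {0..T}"
proof (rule measurable_bounded_imp_integrable_on)
  show "(\<lambda>s. norm (u s - v s)) \<in> borel_measurable (lebesgue_on {0..T})"
    using Uad_measurable[OF u] Uad_measurable[OF v] by measurable
  show "norm (norm (u s - v s)) \<le> 2 * real CARD('m)" if "s \<in> {0..T}" for s
    using Uad_norm_diff_le[OF u v that] by simp
qed

lemma norm_fctrl_le:
  fixes w :: "real^'m"
  assumes w: "\<And>i. \<bar>w $ i\<bar> \<le> 1" and M: "norm (f0 \<theta> x) \<le> M" "\<And>i. norm (f i \<theta> x) \<le> M"
  shows "norm (fctrl f0 f \<theta> w x) \<le> (1 + real CARD('m)) * M"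
proof -
  have "norm (fctrl f0 f \<theta> w x) \<le> norm (f0 \<theta> x) + (\<Sum>i\<in>UNIV. norm ((w $ i) *\<^sub>R f i \<theta> x))"
    unfolding fctrl_def by (intro order_trans[OF norm_triangle_ineq] add_left_mono norm_sum)
  also have "\<dots> \<le> M + (\<Sum>i\<in>(UNIV::'m set). M)"
  proof (intro add_mono M sum_mono)
    fix i
    have "norm ((w $ i) *\<^sub>R f i \<theta> x) = \<bar>w $ i\<bar> * norm (f i \<theta> x)" by simp
    also have "\<dots> \<le> 1 * M" using w[of i] M(2)[of i] by (intro mult_mono) auto
    finally show "norm ((w $ i) *\<^sub>R f i \<theta> x) \<le> M" by simp
  qed
  finally show ?thesis by (simp add: algebra_simps)
qed

lemma norm_closest_point_cball_0_le:
  fixes z :: "'a::euclidean_space"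
  assumes "0 \<le> R"
  shows "norm (closest_point (cball 0 R) z) \<le> norm z"
proof -
  have "closest_point (cball 0 R) 0 = (0::'a)" using assms by (intro closest_point_self) auto
  then show ?thesis
    using closest_point_lipschitz[of "cball 0 R" z 0] assms by (simp add: dist_norm)
qed

definition is_trajectory :: "real \<Rightarrow> (real^'p \<Rightarrow> real^'n \<Rightarrow> real^'n)
      \<Rightarrow> ('m \<Rightarrow> real^'p \<Rightarrow> real^'n \<Rightarrow> real^'n) \<Rightarrow> (real \<Rightarrow> real^'m) \<Rightarrow> real^'p
      \<Rightarrow> (real \<Rightarrow> real^'n) \<Rightarrow> bool" where
  "is_trajectory T f0 f u \<theta> x \<longleftrightarrow> continuous_on {0..T} x \<and>
      (\<forall>t\<in>{0..T}. ((\<lambda>s. fctrl f0 f \<theta> (u s) (x s)) has_integral x t) {0..t}) \<and>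
      (\<forall>t. t \<notin> {0..T} \<longrightarrow> x t = 0)"

lemma traj_eq_The_is_trajectory: "traj T f0 f u \<theta> = (THE x. is_trajectory T f0 f u \<theta> x)"
  unfolding traj_def is_trajectory_def by simp

locale control_affine_field =
  fixes T :: real and f0 :: "real^'p \<Rightarrow> real^'n \<Rightarrow> real^'n"
    and f :: "'m::finite \<Rightarrow> real^'p \<Rightarrow> real^'n \<Rightarrow> real^'n" and \<theta> :: "real^'p"
  assumes T_pos: "0 < T"
    and lipschitz_f0: "\<And>R. \<exists>L. L-lipschitz_on (cball 0 R) (f0 \<theta>)"
    and lipschitz_f: "\<And>i R. \<exists>L. L-lipschitz_on (cball 0 R) (f i \<theta>)"
    and linear_growth: "\<exists>c. \<forall>x. norm (f0 \<theta> x) \<le> c * (1 + norm x) \<and> (\<forall>i. norm (f i \<theta> x) \<le> c * (1 + norm x))"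
begin

lemma fields_lipschitz_on_cball:
  obtains L where "L-lipschitz_on (cball 0 R) (f0 \<theta>)" "\<And>i. L-lipschitz_on (cball 0 R) (f i \<theta>)"
proof -
  obtain L0 where L0: "L0-lipschitz_on (cball 0 R) (f0 \<theta>)" using lipschitz_f0 by blast
  obtain Lf where Lf: "\<And>i. (Lf i)-lipschitz_on (cball 0 R) (f i \<theta>)" using lipschitz_f by metis
  have nonneg: "0 \<le> L0" "\<And>i. 0 \<le> Lf i" using L0 Lf by (auto dest: lipschitz_on_nonneg)
  show thesis
  proof (rule that[of "L0 + (\<Sum>i\<in>UNIV. Lf i)"])
    show "(L0 + (\<Sum>i\<in>UNIV. Lf i))-lipschitz_on (cball 0 R) (f0 \<theta>)"
      using nonneg by (intro lipschitz_on_mono[OF L0]) (auto intro: sum_nonneg)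
    have "Lf i \<le> L0 + (\<Sum>i\<in>UNIV. Lf i)" for i
      using nonneg by (intro add_increasing member_le_sum) auto
    then show "(L0 + (\<Sum>i\<in>UNIV. Lf i))-lipschitz_on (cball 0 R) (f i \<theta>)" for i
      by (intro lipschitz_on_mono[OF Lf[of i]]) auto
  qed
qed

lemma fields_continuous: "continuous_on UNIV (f0 \<theta>)" "continuous_on UNIV (f i \<theta>)"
  using lipschitz_f0 lipschitz_f by (auto intro: continuous_on_if_lipschitz_on_cballs)

lemma fields_bounded_on_cball:
  obtains M where "0 \<le> M" "\<And>x. norm x \<le> R \<Longrightarrow> norm (f0 \<theta> x) \<le> M \<and> (\<forall>i. norm (f i \<theta> x) \<le> M)"
proof -
  obtain c where c: "\<And>x. norm (f0 \<theta> x) \<le> c * (1 + norm x) \<and> (\<forall>i. norm (f i \<theta> x) \<le> c * (1 + norm x))"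
    using linear_growth by blast
  have c_nonneg: "0 \<le> c" using c[of 0] by (auto intro: order_trans[OF norm_ge_zero])
  have "c * (1 + norm x) \<le> c * (1 + max R 0)" if "norm x \<le> R" for x :: "real^'n"
    using c_nonneg that by (intro mult_left_mono) auto
  with c c_nonneg show thesis by (intro that[of "c * (1 + max R 0)"]) (auto intro: order_trans)
qed

lemma fctrl_measurable:
  assumes u: "u \<in> borel_measurable (lebesgue_on {0..T})" and y: "continuous_on {0..T} y"
  shows "(\<lambda>s. fctrl f0 f \<theta> (u s) (y s)) \<in> borel_measurable (lebesgue_on {0..T})"
proof -
  have y_meas: "y \<in> borel_measurable (lebesgue_on {0..T})"
    by (rule continuous_imp_measurable_on_sets_lebesgue[OF y]) auto
  have "(\<lambda>s. u s $ i) \<in> borel_measurable (lebesgue_on {0..T})" for i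
    using u by (rule measurable_compose) (intro borel_measurable_continuous_onI continuous_intros)
  then show ?thesis
    unfolding fctrl_def using fields_continuous
    by (intro borel_measurable_add borel_measurable_sum borel_measurable_scaleR
        measurable_compose[OF y_meas borel_measurable_continuous_onI]) auto
qed

lemma fctrl_integrable:
  assumes u: "u \<in> Uad T" and y: "continuous_on {0..T} y"
  shows "(\<lambda>s. fctrl f0 f \<theta> (u s) (y s)) integrable_on {0..T}"
proof -
  have "bounded (y ` {0..T})" by (intro compact_imp_bounded compact_continuous_image y) simp
  then obtain R where R: "\<And>s. s \<in> {0..T} \<Longrightarrow> norm (y s) \<le> R" by (meson bounded_iff imageI)
  obtain M where M: "\<And>x. norm x \<le> R \<Longrightarrow> norm (f0 \<theta> x) \<le> M \<and> (\<forall>i. norm (f i \<theta> x) \<le> M)"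
    using fields_bounded_on_cball by blast
  show ?thesis
  proof (rule measurable_bounded_imp_integrable_on)
    show "(\<lambda>s. fctrl f0 f \<theta> (u s) (y s)) \<in> borel_measurable (lebesgue_on {0..T})"
      by (rule fctrl_measurable[OF Uad_measurable[OF u] y])
    show "norm (fctrl f0 f \<theta> (u s) (y s)) \<le> (1 + real CARD('m)) * M" if "s \<in> {0..T}" for s
      using u that M[OF R[OF that]] unfolding Uad_def by (intro norm_fctrl_le) auto
  qed
qed

lemma fctrl_lipschitz_on_cball:
  obtains L M where "0 \<le> L" "0 \<le> M"
    "\<And>w w' x y. (\<And>i. \<bar>w $ i\<bar> \<le> 1) \<Longrightarrow> norm x \<le> R \<Longrightarrow> norm y \<le> R \<Longrightarrow>
      norm (fctrl f0 f \<theta> w x - fctrl f0 f \<theta> w' y) \<le> L * norm (x - y) + M * norm (w - w')"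
proof -
  obtain L where L0: "L-lipschitz_on (cball 0 R) (f0 \<theta>)" and L: "\<And>i. L-lipschitz_on (cball 0 R) (f i \<theta>)"
    using fields_lipschitz_on_cball by blast
  obtain M where M: "0 \<le> M" "\<And>x. norm x \<le> R \<Longrightarrow> norm (f0 \<theta> x) \<le> M \<and> (\<forall>i. norm (f i \<theta> x) \<le> M)"
    using fields_bounded_on_cball by blast
  have "norm (fctrl f0 f \<theta> w x - fctrl f0 f \<theta> w' y)
        \<le> (1 + real CARD('m)) * L * norm (x - y) + real CARD('m) * M * norm (w - w')"
    if w: "\<And>i. \<bar>w $ i\<bar> \<le> 1" and x: "norm x \<le> R" and y: "norm y \<le> R" for w w' :: "real^'m" and x y
  proof -
    have f_diff: "norm (f i \<theta> x - f i \<theta> y) \<le> L * norm (x - y)" for i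
      using lipschitz_onD[OF L[of i], of x y] x y by (simp add: dist_norm)
    have "fctrl f0 f \<theta> w x - fctrl f0 f \<theta> w' y = (f0 \<theta> x - f0 \<theta> y)
        + (\<Sum>i\<in>UNIV. (w $ i) *\<^sub>R (f i \<theta> x - f i \<theta> y)) + (\<Sum>i\<in>UNIV. (w $ i - w' $ i) *\<^sub>R f i \<theta> y)"
      unfolding fctrl_def by (simp add: algebra_simps sum.distrib sum_subtractf)
    also have "norm \<dots> \<le> L * norm (x - y) + (\<Sum>i\<in>(UNIV::'m set). L * norm (x - y))
        + (\<Sum>i\<in>(UNIV::'m set). M * norm (w - w'))"
    proof (intro order_trans[OF norm_triangle_ineq] add_mono order_trans[OF norm_sum] sum_mono)
      show "norm (f0 \<theta> x - f0 \<theta> y) \<le> L * norm (x - y)"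
        using lipschitz_onD[OF L0, of x y] x y by (simp add: dist_norm)
      show "norm ((w $ i) *\<^sub>R (f i \<theta> x - f i \<theta> y)) \<le> L * norm (x - y)" for i
        using w[of i] f_diff[of i] mult_mono[of "\<bar>w $ i\<bar>" 1 "norm (f i \<theta> x - f i \<theta> y)"] by simp
      show "norm ((w $ i - w' $ i) *\<^sub>R f i \<theta> y) \<le> M * norm (w - w')" for i
        using M(2)[OF y] component_le_norm_cart[of "w - w'" i]
          mult_mono[of "\<bar>(w - w') $ i\<bar>" "norm (w - w')" "norm (f i \<theta> y)" M]
        by (simp add: mult.commute)
    qed
    finally show ?thesis by (simp add: algebra_simps)
  qed
  then show thesis
    using M(1) lipschitz_on_nonneg[OF L0] by (intro that[of "(1 + real CARD('m)) * L" "real CARD('m) * M"]) auto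
qed

lemma trajectory_stability:
  "\<exists>C\<ge>0. \<forall>u v x y. u \<in> Uad T \<longrightarrow> v \<in> Uad T \<longrightarrow>
      is_trajectory T f0 f u \<theta> x \<longrightarrow> is_trajectory T f0 f v \<theta> y \<longrightarrow>
      (\<forall>s\<in>{0..T}. norm (x s) \<le> R \<and> norm (y s) \<le> R) \<longrightarrow>
      (\<forall>t\<in>{0..T}. norm (x t - y t) \<le> C * integral {0..T} (\<lambda>s. norm (u s - v s)))"
proof -
  obtain L M where LM: "0 \<le> L" "0 \<le> M" and
    fctrl_diff: "\<And>w w' x y. (\<And>i. \<bar>w $ i\<bar> \<le> 1) \<Longrightarrow> norm x \<le> R \<Longrightarrow> norm y \<le> R \<Longrightarrow>
      norm (fctrl f0 f \<theta> w x - fctrl f0 f \<theta> w' y) \<le> L * norm (x - y) + M * norm (w - w')"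
    using fctrl_lipschitz_on_cball by blast
  have "norm (x t - y t) \<le> exp (L * T) * M * integral {0..T} (\<lambda>s. norm (u s - v s))"
    if u: "u \<in> Uad T" and v: "v \<in> Uad T" and x: "is_trajectory T f0 f u \<theta> x" and y: "is_trajectory T f0 f v \<theta> y"
      and R: "\<And>s. s \<in> {0..T} \<Longrightarrow> norm (x s) \<le> R \<and> norm (y s) \<le> R" and t: "t \<in> {0..T}" for u v x y t
  proof -
    have "norm (x t - y t) \<le> exp (L * T) * integral {0..T} (\<lambda>s. M * norm (u s - v s))"
    proof (rule integral_equation_stability[OF _ _ _ _ _ _ LM(1) _ t])
      show "(\<lambda>s. M * norm (u s - v s)) integrable_on {0..T}"
        using Uad_norm_diff_integrable[OF u v] by (simp add: integrable_on_cmult_left[where 'b=real, simplified])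
      show "norm (fctrl f0 f \<theta> (u s) (x s) - fctrl f0 f \<theta> (v s) (y s)) \<le> L * norm (x s - y s) + M * norm (u s - v s)"
        if "s \<in> {0..T}" for s
        using u that R[OF that] by (intro fctrl_diff) (auto simp: Uad_def)
    qed (use x y LM(2) in \<open>auto simp: is_trajectory_def\<close>)
    then show ?thesis by simp
  qed
  then show ?thesis using LM by (intro exI[of _ "exp (L * T) * M"]) auto
qed

lemma is_trajectory_bounded:
  assumes "is_trajectory T f0 f u \<theta> x"
  obtains R where "\<And>t. t \<in> {0..T} \<Longrightarrow> norm (x t) \<le> R"
proof -
  have "bounded (x ` {0..T})"
    using assms by (intro compact_imp_bounded compact_continuous_image) (auto simp: is_trajectory_def)
  then show thesis using that by (meson bounded_iff imageI)
qed

lemma trajectory_unique: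
  assumes u: "u \<in> Uad T" and x: "is_trajectory T f0 f u \<theta> x" and y: "is_trajectory T f0 f u \<theta> y"
  shows "x = y"
proof
  fix t
  obtain R1 where R1: "\<And>t. t \<in> {0..T} \<Longrightarrow> norm (x t) \<le> R1" using is_trajectory_bounded[OF x] by blast
  obtain R2 where R2: "\<And>t. t \<in> {0..T} \<Longrightarrow> norm (y t) \<le> R2" using is_trajectory_bounded[OF y] by blast
  obtain C where C: "\<forall>u v x y. u \<in> Uad T \<longrightarrow> v \<in> Uad T \<longrightarrow>
      is_trajectory T f0 f u \<theta> x \<longrightarrow> is_trajectory T f0 f v \<theta> y \<longrightarrow>
      (\<forall>s\<in>{0..T}. norm (x s) \<le> max R1 R2 \<and> norm (y s) \<le> max R1 R2) \<longrightarrow>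
      (\<forall>t\<in>{0..T}. norm (x t - y t) \<le> C * integral {0..T} (\<lambda>s. norm (u s - v s)))"
    using trajectory_stability[where R="max R1 R2"] by blast
  have "norm (x t - y t) \<le> C * integral {0..T} (\<lambda>s. norm (u s - u s))" if "t \<in> {0..T}"
    using C u x y that R1 R2 by (meson max.coboundedI1 max.coboundedI2)
  then show "x t = y t" using x y by (cases "t \<in> {0..T}") (auto simp: is_trajectory_def)
qed

lemma truncated_solution_exists:
  assumes u: "u \<in> Uad T" and R: "0 \<le> R"
  shows "\<exists>x. continuous_on {0..T} x \<and>
    (\<forall>t\<in>{0..T}. ((\<lambda>s. fctrl f0 f \<theta> (u s) (closest_point (cball 0 R) (x s))) has_integral x t) {0..t})"
proof -
  let ?\<pi> = "closest_point (cball (0::real^'n) R)"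
  have ball: "convex (cball (0::real^'n) R)" "closed (cball (0::real^'n) R)" "cball (0::real^'n) R \<noteq> {}"
    using R by auto
  have \<pi>_in: "norm (?\<pi> z) \<le> R" for z
    using closest_point_in_set[OF ball(2,3), of z] by simp
  obtain L M where LM: "0 \<le> L" "0 \<le> M" and
    fctrl_diff: "\<And>w w' x y. (\<And>i. \<bar>w $ i\<bar> \<le> 1) \<Longrightarrow> norm x \<le> R \<Longrightarrow> norm y \<le> R \<Longrightarrow>
      norm (fctrl f0 f \<theta> w x - fctrl f0 f \<theta> w' y) \<le> L * norm (x - y) + M * norm (w - w')"
    using fctrl_lipschitz_on_cball by blast
  obtain B where "0 \<le> B" and B: "\<And>x. norm x \<le> R \<Longrightarrow> norm (f0 \<theta> x) \<le> B \<and> (\<forall>i. norm (f i \<theta> x) \<le> B)"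
    using fields_bounded_on_cball[where R=R] by blast
  show ?thesis
  proof (rule picard_solution_exists[OF _ LM(1)])
    show "(\<lambda>s. fctrl f0 f \<theta> (u s) (?\<pi> (y s))) integrable_on {0..T}" if "continuous_on {0..T} y" for y
      using continuous_on_compose2[OF continuous_on_closest_point[OF ball] that]
      by (intro fctrl_integrable[OF u]) auto
    show "norm (fctrl f0 f \<theta> (u s) (?\<pi> z) - fctrl f0 f \<theta> (u s) (?\<pi> z')) \<le> L * norm (z - z')"
      if "s \<in> {0..T}" for s z z'
    proof -
      have "norm (fctrl f0 f \<theta> (u s) (?\<pi> z) - fctrl f0 f \<theta> (u s) (?\<pi> z'))
          \<le> L * norm (?\<pi> z - ?\<pi> z') + M * norm (u s - u s)"
        using u that by (intro fctrl_diff \<pi>_in) (auto simp: Uad_def)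
      also have "\<dots> \<le> L * norm (z - z')"
        using LM R closest_point_lipschitz[OF ball, of z z'] by (simp add: dist_norm mult_left_mono)
      finally show ?thesis .
    qed
    show "norm (fctrl f0 f \<theta> (u s) (?\<pi> z)) \<le> (1 + real CARD('m)) * B" if "s \<in> {0..T}" for s z
      using u that B[OF \<pi>_in] by (intro norm_fctrl_le) (auto simp: Uad_def)
  qed (use T_pos in simp)
qed

lemma trajectory_exists:
  assumes u: "u \<in> Uad T"
  shows "\<exists>x. is_trajectory T f0 f u \<theta> x"
proof -
  obtain c where c: "\<And>x. norm (f0 \<theta> x) \<le> c * (1 + norm x) \<and> (\<forall>i. norm (f i \<theta> x) \<le> c * (1 + norm x))"
    using linear_growth by blast
  define K where "K = (1 + real CARD('m)) * c"
  have "0 \<le> c" using c[of 0] by (auto intro: order_trans[OF norm_ge_zero])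
  then have K: "0 \<le> K" by (simp add: K_def)
  have growth: "norm (fctrl f0 f \<theta> (u s) z) \<le> K * (1 + norm z)" if "s \<in> {0..T}" for s z
    using norm_fctrl_le[of "u s" f0 \<theta> z "c * (1 + norm z)" f] u that c[of z]
    by (simp add: K_def Uad_def)
  \<comment> \<open>Solve the system truncated outside the ball where the a priori bound puts every solution.\<close>
  define R where "R = exp (K * T)"
  let ?\<pi> = "closest_point (cball (0::real^'n) R)"
  obtain x where x_cont: "continuous_on {0..T} x"
    and x_eq: "\<And>t. t \<in> {0..T} \<Longrightarrow> ((\<lambda>s. fctrl f0 f \<theta> (u s) (?\<pi> (x s))) has_integral x t) {0..t}"
    using truncated_solution_exists[OF u, of R] by (auto simp: R_def)
  have x_growth: "norm (fctrl f0 f \<theta> (u s) (?\<pi> (x s))) \<le> K * (1 + norm (x s))" if "s \<in> {0..T}" for s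
  proof -
    have "norm (fctrl f0 f \<theta> (u s) (?\<pi> (x s))) \<le> K * (1 + norm (?\<pi> (x s)))" by (rule growth[OF that])
    also have "\<dots> \<le> K * (1 + norm (x s))"
      using K norm_closest_point_cball_0_le[of R "x s"] by (intro mult_left_mono) (auto simp: R_def)
    finally show ?thesis .
  qed
  have x_in_ball: "x t \<in> cball 0 R" if "t \<in> {0..T}" for t
    using integral_equation_growth_bound[OF x_cont x_eq K x_growth that] by (simp add: R_def)
  define x' where "x' t = (if t \<in> {0..T} then x t else 0)" for t
  have "is_trajectory T f0 f u \<theta> x'"
    unfolding is_trajectory_def
  proof (intro conjI ballI allI impI)
    show "continuous_on {0..T} x'" using x_cont by (rule continuous_on_eq) (simp add: x'_def)
    fix t assume t: "t \<in> {0..T}"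
    have "((\<lambda>s. fctrl f0 f \<theta> (u s) (?\<pi> (x s))) has_integral x' t) {0..t}"
      using x_eq[OF t] t by (simp add: x'_def)
    moreover have "fctrl f0 f \<theta> (u s) (?\<pi> (x s)) = fctrl f0 f \<theta> (u s) (x' s)" if "s \<in> {0..t}" for s
      using that t closest_point_self[OF x_in_ball] by (simp add: x'_def)
    ultimately show "((\<lambda>s. fctrl f0 f \<theta> (u s) (x' s)) has_integral x' t) {0..t}"
      by (rule has_integral_eq[rotated])
  qed (auto simp: x'_def)
  then show ?thesis by blast
qed

lemma traj_is_trajectory:
  assumes "u \<in> Uad T"
  shows "is_trajectory T f0 f u \<theta> (traj T f0 f u \<theta>)"
proof -
  have "\<exists>!x. is_trajectory T f0 f u \<theta> x"
    using trajectory_exists[OF assms] trajectory_unique[OF assms] by blast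
  then show ?thesis unfolding traj_eq_The_is_trajectory by (rule theI')
qed

end

section \<open>Regularity in the parameter\<close>

lemma smooth_imp_lipschitz_on_cball_slice:
  fixes g :: "'a::euclidean_space \<times> 'b::euclidean_space \<Rightarrow> 'c::real_normed_vector"
  assumes "smooth g"
  shows "\<exists>L. L-lipschitz_on (cball 0 R) (\<lambda>x. g (\<theta>, x))"
proof -
  have "Ck 1 g" using assms by (simp add: smooth_def)
  then have diff: "\<And>z. g differentiable (at z)"
    and partials_cont: "\<And>e. e \<in> Basis \<Longrightarrow> continuous_on UNIV (\<lambda>z. frechet_derivative g (at z) e)"
    by auto
  define D where "D z = frechet_derivative g (at z)" for z
  have g_D: "(g has_derivative D z) (at z)" for z
    using diff[of z] unfolding D_def by (simp add: frechet_derivative_works)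
  define S where "S = (\<lambda>x. (\<theta>, x)) ` cball (0::'b) R"
  have "compact S" unfolding S_def by (intro compact_continuous_image) (auto intro: continuous_intros)
  have "\<exists>B\<ge>0. \<forall>z\<in>S. norm (D z (0, e)) \<le> B" if e: "e \<in> Basis" for e
  proof -
    have "(0, e) \<in> (Basis :: ('a \<times> 'b) set)" using e by (simp add: Basis_prod_def)
    then have "continuous_on S (\<lambda>z. D z (0, e))"
      unfolding D_def using partials_cont by (meson continuous_on_subset subset_UNIV)
    then have "bounded ((\<lambda>z. D z (0, e)) ` S)" by (intro compact_imp_bounded compact_continuous_image \<open>compact S\<close>)
    then obtain B where "\<forall>z\<in>S. norm (D z (0, e)) \<le> B" by (meson bounded_iff imageI)
    then show ?thesis by (intro exI[of _ "max B 0"]) (auto intro: le_max_iff_disj[THEN iffD2])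
  qed
  then obtain B where B_nonneg: "\<And>e. e \<in> Basis \<Longrightarrow> 0 \<le> B e"
    and B: "\<And>e z. e \<in> Basis \<Longrightarrow> z \<in> S \<Longrightarrow> norm (D z (0, e)) \<le> B e"
    by metis
  have slice_deriv: "((\<lambda>x. g (\<theta>, x)) has_derivative (\<lambda>v. D (\<theta>, x) (0, v))) (at x within cball 0 R)" for x
    using has_derivative_compose[OF has_derivative_Pair[OF has_derivative_const has_derivative_ident] g_D]
    by (simp add: has_derivative_at_withinI)
  have "onorm (\<lambda>v. D (\<theta>, x) (0, v)) \<le> (\<Sum>e\<in>Basis. B e)" if "x \<in> cball 0 R" for x
  proof (rule onorm_componentwise_le)
    show "bounded_linear (\<lambda>v. D (\<theta>, x) (0, v))"
      using slice_deriv[of x] by (rule has_derivative_bounded_linear)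
    show "(\<Sum>e\<in>Basis. norm (D (\<theta>, x) (0, e))) \<le> (\<Sum>e\<in>Basis. B e)"
      using that by (intro sum_mono B) (auto simp: S_def)
  qed
  then have "norm (g (\<theta>, x) - g (\<theta>, y)) \<le> (\<Sum>e\<in>Basis. B e) * norm (x - y)"
    if "x \<in> cball 0 R" "y \<in> cball 0 R" for x y
    using that by (intro differentiable_bound[OF convex_cball slice_deriv]) auto
  then have "(\<Sum>e\<in>Basis. B e)-lipschitz_on (cball 0 R) (\<lambda>x. g (\<theta>, x))"
    using B_nonneg by (intro lipschitz_onI) (auto simp: dist_norm intro: sum_nonneg)
  then show ?thesis by blast
qed

lemma control_affine_field_if_smooth:
  fixes f0 :: "real^'p \<Rightarrow> real^'n \<Rightarrow> real^'n" and f :: "'m::finite \<Rightarrow> real^'p \<Rightarrow> real^'n \<Rightarrow> real^'n"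
  assumes "0 < T"
    and "smooth (\<lambda>z::(real^'p) \<times> (real^'n). f0 (fst z) (snd z))"
    and "\<And>i. smooth (\<lambda>z::(real^'p) \<times> (real^'n). f i (fst z) (snd z))"
    and "\<exists>c. \<forall>x. norm (f0 \<theta> x) \<le> c * (1 + norm x) \<and> (\<forall>i. norm (f i \<theta> x) \<le> c * (1 + norm x))"
  shows "control_affine_field T f0 f \<theta>"
proof unfold_locales
  show "\<exists>L. L-lipschitz_on (cball 0 R) (f0 \<theta>)" for R
    using smooth_imp_lipschitz_on_cball_slice[OF assms(2), of R \<theta>] by simp
  show "\<exists>L. L-lipschitz_on (cball 0 R) (f i \<theta>)" for i R
    using smooth_imp_lipschitz_on_cball_slice[OF assms(3)[of i], of R \<theta>] by simp
qed (use assms in auto)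

lemma has_vector_derivative_of_shifted:
  fixes g :: "real \<Rightarrow> 'b::real_normed_vector"
  assumes "((\<lambda>\<sigma>. g (\<sigma>0 + \<sigma>)) has_vector_derivative d) (at 0)"
  shows "(g has_vector_derivative d) (at \<sigma>0)"
proof -
  have shift: "((\<lambda>\<sigma>. \<sigma> - \<sigma>0) has_vector_derivative 1) (at \<sigma>0)"
    by (rule derivative_eq_intros refl | simp)+
  have "(((\<lambda>\<sigma>. g (\<sigma>0 + \<sigma>)) \<circ> (\<lambda>\<sigma>. \<sigma> - \<sigma>0)) has_vector_derivative 1 *\<^sub>R d) (at \<sigma>0)"
    by (rule vector_diff_chain_at[OF shift]) (use assms in simp)
  then show ?thesis by (simp add: o_def)
qed

lemma norm_diff_le_along_axis:
  fixes h :: "real^'p \<Rightarrow> 'b::real_normed_vector"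
  assumes partial: "\<And>\<theta>. \<exists>d. ((\<lambda>s. h (\<theta> + s *\<^sub>R axis j 1)) has_vector_derivative d) (at 0) \<and> norm d \<le> b \<theta>"
    and B: "\<And>\<sigma>. \<bar>\<sigma>\<bar> \<le> \<bar>s\<bar> \<Longrightarrow> b (\<zeta> + \<sigma> *\<^sub>R axis j 1) \<le> B"
  shows "norm (h (\<zeta> + s *\<^sub>R axis j 1) - h \<zeta>) \<le> B * \<bar>s\<bar>"
proof -
  define \<phi> where "\<phi> \<sigma> = h (\<zeta> + \<sigma> *\<^sub>R axis j 1)" for \<sigma>
  have "\<exists>d. (\<phi> has_vector_derivative d) (at \<sigma>) \<and> norm d \<le> b (\<zeta> + \<sigma> *\<^sub>R axis j 1)" for \<sigma>
  proof -
    obtain d where d: "((\<lambda>s. h ((\<zeta> + \<sigma> *\<^sub>R axis j 1) + s *\<^sub>R axis j 1)) has_vector_derivative d) (at 0)"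
      "norm d \<le> b (\<zeta> + \<sigma> *\<^sub>R axis j 1)"
      using partial by blast
    have "(\<lambda>s. h ((\<zeta> + \<sigma> *\<^sub>R axis j 1) + s *\<^sub>R axis j 1)) = (\<lambda>s. \<phi> (\<sigma> + s))"
      by (simp add: \<phi>_def scaleR_add_left add.assoc)
    with d show ?thesis by (auto intro: has_vector_derivative_of_shifted)
  qed
  then obtain D where D: "\<And>\<sigma>. (\<phi> has_vector_derivative D \<sigma>) (at \<sigma>)"
    "\<And>\<sigma>. norm (D \<sigma>) \<le> b (\<zeta> + \<sigma> *\<^sub>R axis j 1)"
    by metis
  have "norm (\<phi> s - \<phi> 0) \<le> B * norm (s - 0)"
  proof (rule differentiable_bound[OF convex_closed_segment, of 0 s \<phi> "\<lambda>\<sigma> x. x *\<^sub>R D \<sigma>"])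
    fix \<sigma> assume \<sigma>: "\<sigma> \<in> closed_segment 0 s"
    show "(\<phi> has_derivative (\<lambda>x. x *\<^sub>R D \<sigma>)) (at \<sigma> within closed_segment 0 s)"
      using D(1)[of \<sigma>] unfolding has_vector_derivative_def by (rule has_derivative_at_withinI)
    have "\<bar>\<sigma>\<bar> \<le> \<bar>s\<bar>" using \<sigma> by (auto simp: closed_segment_eq_real_ivl split: if_splits)
    then have "norm (D \<sigma>) \<le> B" using D(2)[of \<sigma>] B by fastforce
    then show "onorm (\<lambda>x. x *\<^sub>R D \<sigma>) \<le> B"
      by (simp add: onorm_scaleR_left[OF bounded_linear_ident] onorm_id[unfolded id_def])
  qed auto
  then show ?thesis by (simp add: \<phi>_def)
qed

lemma norm_diff_le_by_partial_derivative_bound: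
  fixes h :: "real^'p \<Rightarrow> 'b::real_normed_vector"
  assumes partial: "\<And>\<theta> i. \<exists>d. ((\<lambda>s. h (\<theta> + s *\<^sub>R axis i 1)) has_vector_derivative d) (at 0) \<and> norm d \<le> b \<theta>"
    and B: "\<And>\<theta>. dist \<theta> \<theta>0 \<le> (\<Sum>i\<in>UNIV. \<bar>(\<theta>' - \<theta>0) $ i\<bar>) \<Longrightarrow> b \<theta> \<le> B"
  shows "norm (h \<theta>' - h \<theta>0) \<le> B * (\<Sum>i\<in>UNIV. \<bar>(\<theta>' - \<theta>0) $ i\<bar>)"
proof -
  define \<Delta> where "\<Delta> = \<theta>' - \<theta>0"
  \<comment> \<open>Walk from \<open>\<theta>0\<close> to \<open>\<theta>'\<close> one coordinate direction at a time.\<close>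
  define \<theta>S where "\<theta>S S = \<theta>0 + (\<Sum>i\<in>S. (\<Delta> $ i) *\<^sub>R axis i (1::real))" for S
  have walk: "norm (h (\<theta>S S) - h \<theta>0) \<le> B * (\<Sum>i\<in>S. \<bar>\<Delta> $ i\<bar>)" if "finite S" for S
    using that
  proof (induction S rule: finite_induct)
    case empty
    then show ?case by (simp add: \<theta>S_def)
  next
    case (insert j S)
    have "norm (h (\<theta>S S + (\<Delta> $ j) *\<^sub>R axis j 1) - h (\<theta>S S)) \<le> B * \<bar>\<Delta> $ j\<bar>"
    proof (rule norm_diff_le_along_axis[OF partial])
      fix \<sigma> :: real assume \<sigma>: "\<bar>\<sigma>\<bar> \<le> \<bar>\<Delta> $ j\<bar>"
      have "dist (\<theta>S S + \<sigma> *\<^sub>R axis j 1) \<theta>0 = norm ((\<Sum>i\<in>S. (\<Delta> $ i) *\<^sub>R axis i (1::real)) + \<sigma> *\<^sub>R axis j 1)"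
        by (simp add: \<theta>S_def dist_norm)
      also have "\<dots> \<le> (\<Sum>i\<in>S. norm ((\<Delta> $ i) *\<^sub>R axis i (1::real))) + norm (\<sigma> *\<^sub>R axis j (1::real))"
        by (intro order_trans[OF norm_triangle_ineq] add_right_mono norm_sum)
      also have "\<dots> \<le> (\<Sum>i\<in>insert j S. \<bar>\<Delta> $ i\<bar>)" using insert \<sigma> by simp
      also have "\<dots> \<le> (\<Sum>i\<in>UNIV. \<bar>\<Delta> $ i\<bar>)" by (intro sum_mono2) auto
      finally show "b (\<theta>S S + \<sigma> *\<^sub>R axis j 1) \<le> B" by (rule B[unfolded \<Delta>_def[symmetric]])
    qed
    moreover have "\<theta>S (insert j S) = \<theta>S S + (\<Delta> $ j) *\<^sub>R axis j 1"
      unfolding \<theta>S_def using insert(1,2) by (simp add: add.commute add.left_commute)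
    ultimately have "norm (h (\<theta>S (insert j S)) - h \<theta>0) \<le> B * \<bar>\<Delta> $ j\<bar> + B * (\<Sum>i\<in>S. \<bar>\<Delta> $ i\<bar>)"
      using insert.IH norm_triangle_ineq[of "h (\<theta>S (insert j S)) - h (\<theta>S S)" "h (\<theta>S S) - h \<theta>0"] by simp
    then show ?case using insert by (simp add: algebra_simps)
  qed
  have "\<theta>S UNIV = \<theta>'"
    using basis_expansion[of \<Delta>] by (simp add: \<theta>S_def \<Delta>_def scalar_mult_eq_scaleR)
  then show ?thesis using walk[of UNIV] by (simp add: \<Delta>_def)
qed

section \<open>Limits of admissible controls\<close>

lemma lebesgue_on_interval_integrable_bounded:
  fixes g :: "real \<Rightarrow> 'b::euclidean_space"
  assumes "g \<in> borel_measurable (lebesgue_on {a..b})" "\<And>t. t \<in> {a..b} \<Longrightarrow> norm (g t) \<le> B"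
  shows "integrable (lebesgue_on {a..b}) g"
    and "integral\<^sup>L (lebesgue_on {a..b}) g = integral {a..b} g"
proof -
  have "finite_measure (lebesgue_on {a..b})" by (rule finite_measure_lebesgue_on) auto
  then show integrable: "integrable (lebesgue_on {a..b}) g"
    using assms by (intro finite_measure.integrable_const_bound[where B=B]) auto
  show "integral\<^sup>L (lebesgue_on {a..b}) g = integral {a..b} g"
    by (rule lebesgue_integral_eq_integral[OF integrable]) auto
qed

lemma integral_tendsto_if_ae_tendsto_bounded:
  fixes g :: "nat \<Rightarrow> real \<Rightarrow> 'b::euclidean_space"
  assumes g_meas: "\<And>k. g k \<in> borel_measurable (lebesgue_on {a..b})"
    and g_bounded: "\<And>k t. t \<in> {a..b} \<Longrightarrow> norm (g k t) \<le> B"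
    and lim: "AE t in lebesgue_on {a..b}. (\<lambda>k. g k t) \<longlonglongrightarrow> h t"
    and h_meas: "h \<in> borel_measurable (lebesgue_on {a..b})"
  shows "(\<lambda>k. integral {a..b} (g k)) \<longlonglongrightarrow> integral {a..b} h"
proof -
  let ?M = "lebesgue_on {a..b}"
  have "finite_measure ?M" by (rule finite_measure_lebesgue_on) auto
  then have B: "integrable ?M (\<lambda>t. B)" by (rule finite_measure.integrable_const)
  have bounded: "AE t in ?M. norm (g k t) \<le> B" for k by (rule AE_I2) (use g_bounded in auto)
  have "(\<lambda>k. integral\<^sup>L ?M (g k)) \<longlonglongrightarrow> integral\<^sup>L ?M h"
    by (rule integral_dominated_convergence[OF h_meas g_meas B lim bounded])
  moreover have "integral\<^sup>L ?M (g k) = integral {a..b} (g k)" for k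
    using lebesgue_on_interval_integrable_bounded[OF g_meas g_bounded] by blast
  moreover have "integral\<^sup>L ?M h = integral {a..b} h"
    by (rule lebesgue_integral_eq_integral[OF integrable_dominated_convergence[OF h_meas g_meas B lim bounded]])
      auto
  ultimately show ?thesis by simp
qed

lemma integral_le_by_integral_square:
  fixes g :: "real \<Rightarrow> real"
  assumes "g integrable_on {0..T}" "(\<lambda>t. (g t)\<^sup>2) integrable_on {0..T}" "0 < d" "0 \<le> T"
  shows "integral {0..T} g \<le> d * T + integral {0..T} (\<lambda>t. (g t)\<^sup>2) / d"
proof -
  have "g t \<le> d + (g t)\<^sup>2 / d" for t
  proof (cases "g t \<le> d")
    case False
    then have "g t * d \<le> g t * g t" using \<open>0 < d\<close> by (intro mult_left_mono) auto
    then have "g t \<le> (g t)\<^sup>2 / d" using \<open>0 < d\<close> by (simp add: field_simps power2_eq_square)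
    then show ?thesis using \<open>0 < d\<close> by linarith
  qed (use \<open>0 < d\<close> in \<open>simp add: add_increasing2\<close>)
  then have "integral {0..T} g \<le> integral {0..T} (\<lambda>t. d + (g t)\<^sup>2 / d)"
    using assms by (intro integral_le) (auto intro: integrable_add integrable_divide)
  also have "\<dots> = integral {0..T} (\<lambda>t. d) + integral {0..T} (\<lambda>t. (g t)\<^sup>2 / d)"
    using assms by (intro integral_add integrable_divide) auto
  also have "\<dots> = d * T + integral {0..T} (\<lambda>t. (g t)\<^sup>2) / d"
    using assms by (simp add: mult.commute)
  finally show ?thesis .
qed

lemma Uad_sq_diff_measurable:
  "u \<in> Uad T \<Longrightarrow> v \<in> Uad T \<Longrightarrow>
    (\<lambda>t. (norm (u t - v t))\<^sup>2) \<in> borel_measurable (lebesgue_on {0..T})"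
  using Uad_measurable[of u T] Uad_measurable[of v T] by measurable

lemma Uad_sq_diff_le:
  fixes u v :: "real \<Rightarrow> real^'m"
  assumes "u \<in> Uad T" "v \<in> Uad T" "t \<in> {0..T}"
  shows "norm ((norm (u t - v t))\<^sup>2) \<le> (2 * real CARD('m))\<^sup>2"
  using power_mono[OF Uad_norm_diff_le[OF assms] norm_ge_zero, of 2] by simp

lemma Uad_sq_diff_integrable:
  "u \<in> Uad T \<Longrightarrow> v \<in> Uad T \<Longrightarrow> (\<lambda>t. (norm (u t - v t))\<^sup>2) integrable_on {0..T}"
  for u v :: "real \<Rightarrow> real^'m"
  by (rule measurable_bounded_imp_integrable_on[OF Uad_sq_diff_measurable Uad_sq_diff_le])

lemma Uad_ae_limit:
  fixes u :: "nat \<Rightarrow> real \<Rightarrow> real^'m"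
  assumes u: "\<And>k. u k \<in> Uad T" and Cauchy: "AE t in lebesgue_on {0..T}. Cauchy (\<lambda>k. u k t)"
  shows "\<exists>v \<in> Uad T. AE t in lebesgue_on {0..T}. (\<lambda>k. u k t) \<longlonglongrightarrow> v t"
proof -
  let ?M = "lebesgue_on {0..T}"
  define Box where "Box = cbox (-1) (1::real^'m)"
  have in_Box: "x \<in> Box \<longleftrightarrow> (\<forall>i. \<bar>x $ i\<bar> \<le> 1)" for x :: "real^'m"
    unfolding Box_def mem_box_cart by (auto simp: abs_le_iff)
  have Box: "convex Box" "closed Box" "Box \<noteq> {}" using in_Box[of 0] unfolding Box_def by auto
  \<comment> \<open>Projecting onto \<open>Box\<close> keeps the limit admissible also where it does not exist.\<close>
  define v where "v t = closest_point Box (lim (\<lambda>k. u k t))" for t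
  have "(\<lambda>t. lim (\<lambda>k. u k t)) \<in> borel_measurable ?M"
    by (intro borel_measurable_lim_metric Uad_measurable u)
  then have "v \<in> borel_measurable ?M"
    unfolding v_def using borel_measurable_continuous_onI[OF continuous_on_closest_point[OF Box]]
    by (rule measurable_compose)
  then have "v \<in> Uad T"
    unfolding Uad_def using closest_point_in_set[OF Box(2,3)] in_Box by (auto simp: v_def)
  moreover have "AE t in ?M. (\<lambda>k. u k t) \<longlonglongrightarrow> v t"
    using eventually_conj[OF Cauchy AE_space]
  proof (rule eventually_mono)
    fix t assume t: "Cauchy (\<lambda>k. u k t) \<and> t \<in> space ?M"
    then have lim: "(\<lambda>k. u k t) \<longlonglongrightarrow> lim (\<lambda>k. u k t)"
      by (simp add: Cauchy_convergent_iff convergent_LIMSEQ_iff)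
    have "u k t \<in> Box" for k using u[of k] t unfolding Uad_def in_Box by auto
    then have "lim (\<lambda>k. u k t) \<in> Box" by (rule closed_sequentially[OF Box(2) _ lim])
    then show "(\<lambda>k. u k t) \<longlonglongrightarrow> v t" using lim by (simp add: v_def closest_point_self)
  qed
  ultimately show ?thesis by blast
qed

lemma Uad_L2_Cauchy_imp_ae_convergent_subseq:
  fixes u :: "nat \<Rightarrow> real \<Rightarrow> real^'m"
  assumes T: "0 < T" and u: "\<And>k. u k \<in> Uad T"
    and Cauchy: "\<And>e. e > 0 \<Longrightarrow> \<exists>N. \<forall>i\<ge>N. \<forall>j\<ge>N. integral {0..T} (\<lambda>t. (norm (u i t - u j t))\<^sup>2) < e"
  shows "\<exists>r. \<exists>v \<in> Uad T. strict_mono r \<and> (AE t in lebesgue_on {0..T}. (\<lambda>k. u (r k) t) \<longlonglongrightarrow> v t)"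
proof -
  let ?M = "lebesgue_on {0..T}"
  have integrable: "integrable ?M (u k)" for k
    by (rule lebesgue_on_interval_integrable_bounded(1)[OF Uad_measurable Uad_norm_le]) (use u in auto)
  have "\<exists>N. \<forall>i\<ge>N. \<forall>j\<ge>N. (LINT t|?M. norm (u i t - u j t)) < e" if e: "e > 0" for e
  proof -
    define d where "d = e / (2 * T)"
    have d: "d > 0" using e T by (simp add: d_def)
    obtain N where N: "\<And>i j. i \<ge> N \<Longrightarrow> j \<ge> N \<Longrightarrow> integral {0..T} (\<lambda>t. (norm (u i t - u j t))\<^sup>2) < d * e / 2"
      using Cauchy[of "d * e / 2"] d e by auto
    have "(LINT t|?M. norm (u i t - u j t)) < e" if "i \<ge> N" "j \<ge> N" for i j
    proof -
      have "(LINT t|?M. norm (u i t - u j t)) = integral {0..T} (\<lambda>t. norm (u i t - u j t))"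
        using Uad_measurable[OF u[of i]] Uad_measurable[OF u[of j]] Uad_norm_diff_le[OF u u]
        by (intro lebesgue_on_interval_integrable_bounded(2)[where B="2 * real CARD('m)"]) auto
      also have "\<dots> \<le> d * T + integral {0..T} (\<lambda>t. (norm (u i t - u j t))\<^sup>2) / d"
        using Uad_norm_diff_integrable[OF u u] Uad_sq_diff_integrable[OF u u] d T
        by (intro integral_le_by_integral_square) auto
      also have "\<dots> < d * T + (d * e / 2) / d"
        using N[OF that] d by (intro add_strict_left_mono divide_strict_right_mono) auto
      also have "\<dots> = e" using d T by (simp add: d_def field_simps)
      finally show ?thesis .
    qed
    then show ?thesis by blast
  qed
  then obtain r where r: "strict_mono r" and "AE t in ?M. Cauchy (\<lambda>k. u (r k) t)"
    using cauchy_L1_AE_cauchy_subseq[of ?M u, OF integrable] by blast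
  then obtain v where "v \<in> Uad T" "AE t in ?M. (\<lambda>k. u (r k) t) \<longlonglongrightarrow> v t"
    using Uad_ae_limit[of "\<lambda>k. u (r k)"] u by blast
  with r show ?thesis by blast
qed

section \<open>The optimal control problem\<close>

lemma abs_norm_sq_diff_le:
  fixes x y :: "'a::real_normed_vector"
  assumes "norm x \<le> A" "norm y \<le> A"
  shows "\<bar>(norm x)\<^sup>2 - (norm y)\<^sup>2\<bar> \<le> 2 * A * norm (x - y)"
proof -
  have "(norm x)\<^sup>2 - (norm y)\<^sup>2 = (norm x - norm y) * (norm x + norm y)"
    by (simp add: power2_eq_square algebra_simps)
  then have "\<bar>(norm x)\<^sup>2 - (norm y)\<^sup>2\<bar> = \<bar>norm x - norm y\<bar> * (norm x + norm y)"
    by (simp add: abs_mult)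
  also have "\<dots> \<le> norm (x - y) * (2 * A)"
    using assms by (intro mult_mono norm_triangle_ineq3) auto
  finally show ?thesis by (simp add: algebra_simps)
qed

lemma integral_abs_diff_le:
  fixes g h :: "real \<Rightarrow> real"
  assumes "g integrable_on {0..T}" "h integrable_on {0..T}" "0 \<le> T"
    and "\<And>t. t \<in> {0..T} \<Longrightarrow> \<bar>g t - h t\<bar> \<le> c"
  shows "\<bar>integral {0..T} g - integral {0..T} h\<bar> \<le> T * c"
proof -
  have "\<bar>integral {0..T} g - integral {0..T} h\<bar> = norm (integral {0..T} (\<lambda>t. g t - h t))"
    using assms by (simp add: integral_diff)
  also have "\<dots> \<le> integral {0..T} (\<lambda>t. c)"
    using assms by (intro integral_norm_bound_integral integrable_diff) auto
  finally show ?thesis using assms by simp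
qed

locale optimal_control_problem =
  fixes T \<alpha> \<eta> :: real and \<psi> :: "real \<Rightarrow> real^'m"
    and f0 :: "real^'p \<Rightarrow> real^'n \<Rightarrow> real^'n" and f :: "'m \<Rightarrow> real^'p \<Rightarrow> real^'n \<Rightarrow> real^'n"
    and a b :: "real^'p \<Rightarrow> real" and ut :: "real \<Rightarrow> real^'m" and \<mu> :: "(real^'p) measure"
  assumes T_pos: "0 < T" and \<alpha>_pos: "0 < \<alpha>" and \<eta>_pos: "0 < \<eta>"
    and \<psi>_cont: "continuous_on {0..T} \<psi>" and ut_adm: "ut \<in> Uad T"
    and fields: "\<And>\<theta>. control_affine_field T f0 f \<theta>"
    and sets_\<mu>: "sets \<mu> = sets borel"
    and a_L2: "integrable \<mu> (\<lambda>\<theta>. (a \<theta>)\<^sup>2)"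
    and a_bounded: "\<And>K. compact K \<Longrightarrow> bounded (a ` K)"
    and b_bounded: "\<And>K. compact K \<Longrightarrow> bounded (b ` K)"
    and traj_le_a: "\<And>u t \<theta>. u \<in> Uad T \<Longrightarrow> t \<in> {0..T} \<Longrightarrow> norm (traj T f0 f u \<theta> t) \<le> a \<theta>"
    and traj_partial_le_b: "\<And>u t \<theta> i. u \<in> Uad T \<Longrightarrow> t \<in> {0..T} \<Longrightarrow>
      \<exists>d. ((\<lambda>s. traj T f0 f u (\<theta> + s *\<^sub>R axis i 1) t) has_vector_derivative d) (at 0) \<and> norm d \<le> b \<theta>"
    and Ecost_convex: "\<And>u v l. u \<in> Uad T \<Longrightarrow> v \<in> Uad T \<Longrightarrow> l \<in> {0..1} \<Longrightarrow>
      Ecost T f0 f \<mu> (\<lambda>t. l *\<^sub>R u t + (1 - l) *\<^sub>R v t) \<le> l * Ecost T f0 f \<mu> u + (1 - l) * Ecost T f0 f \<mu> v"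
begin

definition state_cost :: "(real \<Rightarrow> real^'m) \<Rightarrow> real^'p \<Rightarrow> real" where
  "state_cost u \<theta> = integral {0..T} (\<lambda>t. (norm (traj T f0 f u \<theta> t))\<^sup>2)"

lemma Ecost_eq_integral_state_cost: "Ecost T f0 f \<mu> u = (\<integral>\<theta>. state_cost u \<theta> \<partial>\<mu>)"
  unfolding Ecost_def state_cost_def ..

lemma traj_sq_integrable: "u \<in> Uad T \<Longrightarrow> (\<lambda>t. (norm (traj T f0 f u \<theta> t))\<^sup>2) integrable_on {0..T}"
  using control_affine_field.traj_is_trajectory[OF fields]
  by (intro integrable_continuous_interval continuous_intros) (auto simp: is_trajectory_def)

lemma state_cost_nonneg: "u \<in> Uad T \<Longrightarrow> 0 \<le> state_cost u \<theta>"
  unfolding state_cost_def by (rule integral_nonneg[OF traj_sq_integrable]) auto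

lemma state_cost_le: "u \<in> Uad T \<Longrightarrow> state_cost u \<theta> \<le> T * (a \<theta>)\<^sup>2"
proof -
  assume u: "u \<in> Uad T"
  have "state_cost u \<theta> \<le> integral {0..T} (\<lambda>t. (a \<theta>)\<^sup>2)"
    unfolding state_cost_def using traj_le_a[OF u]
    by (intro integral_le traj_sq_integrable[OF u] integrable_const_ivl power_mono) auto
  then show ?thesis using T_pos by simp
qed

lemma traj_lipschitz_on_cball:
  assumes u: "u \<in> Uad T"
  shows "\<exists>B\<ge>0. \<forall>t\<in>{0..T}. \<forall>\<theta>\<in>cball 0 R. \<forall>\<theta>'\<in>cball 0 R.
    norm (traj T f0 f u \<theta>' t - traj T f0 f u \<theta> t) \<le> B * dist \<theta>' \<theta>"
proof -
  \<comment> \<open>The coordinate paths between points of \<open>cball 0 R\<close> stay in \<open>K\<close>.\<close>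
  define K where "K = cball (0::real^'p) ((1 + 2 * CARD('p)) * \<bar>R\<bar>)"
  obtain B where B: "\<forall>x\<in>b ` K. norm x \<le> B" using b_bounded[of K] by (auto simp: K_def bounded_iff)
  have "norm (traj T f0 f u \<theta>' t - traj T f0 f u \<theta> t) \<le> max B 0 * CARD('p) * dist \<theta>' \<theta>"
    if t: "t \<in> {0..T}" and \<theta>: "\<theta> \<in> cball 0 R" and \<theta>': "\<theta>' \<in> cball 0 R" for t \<theta> \<theta>'
  proof -
    have sum_le: "(\<Sum>i\<in>UNIV. \<bar>(\<theta>' - \<theta>) $ i\<bar>) \<le> CARD('p) * dist \<theta>' \<theta>"
      using sum_mono[of UNIV "\<lambda>i. \<bar>(\<theta>' - \<theta>) $ i\<bar>" "\<lambda>i. dist \<theta>' \<theta>"] component_le_norm_cart[of "\<theta>' - \<theta>"]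
      by (simp add: dist_norm)
    have "b \<zeta> \<le> max B 0" if "dist \<zeta> \<theta> \<le> (\<Sum>i\<in>UNIV. \<bar>(\<theta>' - \<theta>) $ i\<bar>)" for \<zeta>
    proof -
      have "dist \<theta>' \<theta> \<le> 2 * \<bar>R\<bar>" using \<theta> \<theta>' dist_triangle2[of \<theta>' \<theta> 0] by (auto simp: dist_commute)
      then have "CARD('p) * dist \<theta>' \<theta> \<le> CARD('p) * (2 * \<bar>R\<bar>)" by (rule mult_left_mono) simp
      then have "norm \<zeta> \<le> norm \<theta> + CARD('p) * (2 * \<bar>R\<bar>)"
        using that sum_le norm_triangle_ineq2[of \<zeta> \<theta>] unfolding dist_norm by linarith
      then have "\<zeta> \<in> K" using \<theta> by (simp add: K_def algebra_simps)
      then show ?thesis using B by fastforce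
    qed
    then have "norm (traj T f0 f u \<theta>' t - traj T f0 f u \<theta> t) \<le> max B 0 * (\<Sum>i\<in>UNIV. \<bar>(\<theta>' - \<theta>) $ i\<bar>)"
      using traj_partial_le_b[OF u t] by (intro norm_diff_le_by_partial_derivative_bound) auto
    also have "\<dots> \<le> max B 0 * (CARD('p) * dist \<theta>' \<theta>)" by (intro mult_left_mono sum_le) simp
    finally show ?thesis by (simp add: algebra_simps)
  qed
  then show ?thesis by (intro exI[of _ "max B 0 * CARD('p)"]) auto
qed

lemma state_cost_lipschitz_on_cball:
  assumes u: "u \<in> Uad T"
  shows "\<exists>L. L-lipschitz_on (cball 0 R) (state_cost u)"
proof -
  obtain B where B_nonneg: "0 \<le> B" and B: "\<forall>t\<in>{0..T}. \<forall>\<theta>\<in>cball 0 R. \<forall>\<theta>'\<in>cball 0 R.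
      norm (traj T f0 f u \<theta>' t - traj T f0 f u \<theta> t) \<le> B * dist \<theta>' \<theta>"
    using traj_lipschitz_on_cball[OF u] by blast
  obtain A where A: "\<forall>\<theta>\<in>cball 0 R. \<bar>a \<theta>\<bar> \<le> A" using a_bounded[of "cball 0 R"] by (auto simp: bounded_iff)
  have "\<bar>state_cost u \<theta>' - state_cost u \<theta>\<bar> \<le> T * (2 * max A 0 * B) * dist \<theta>' \<theta>"
    if \<theta>: "\<theta> \<in> cball 0 R" and \<theta>': "\<theta>' \<in> cball 0 R" for \<theta> \<theta>'
  proof -
    have "\<bar>state_cost u \<theta>' - state_cost u \<theta>\<bar> \<le> T * (2 * max A 0 * (B * dist \<theta>' \<theta>))"
      unfolding state_cost_def
    proof (rule integral_abs_diff_le[OF traj_sq_integrable[OF u] traj_sq_integrable[OF u]])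
      fix t assume t: "t \<in> {0..T}"
      have "norm (traj T f0 f u \<zeta> t) \<le> max A 0" if "\<zeta> \<in> cball 0 R" for \<zeta>
        using traj_le_a[OF u t, of \<zeta>] A that abs_ge_self[of "a \<zeta>"] by fastforce
      then have "\<bar>(norm (traj T f0 f u \<theta>' t))\<^sup>2 - (norm (traj T f0 f u \<theta> t))\<^sup>2\<bar>
          \<le> 2 * max A 0 * norm (traj T f0 f u \<theta>' t - traj T f0 f u \<theta> t)"
        using \<theta> \<theta>' by (intro abs_norm_sq_diff_le) auto
      also have "\<dots> \<le> 2 * max A 0 * (B * dist \<theta>' \<theta>)"
        using B t \<theta> \<theta>' by (intro mult_left_mono) auto
      finally show "\<bar>(norm (traj T f0 f u \<theta>' t))\<^sup>2 - (norm (traj T f0 f u \<theta> t))\<^sup>2\<bar>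
          \<le> 2 * max A 0 * (B * dist \<theta>' \<theta>)" .
    qed (use T_pos in simp)
    then show ?thesis by (simp add: algebra_simps)
  qed
  then have "(T * (2 * max A 0 * B))-lipschitz_on (cball 0 R) (state_cost u)"
    using T_pos B_nonneg by (intro lipschitz_onI) (auto simp: dist_real_def)
  then show ?thesis by blast
qed

lemma state_cost_measurable: "u \<in> Uad T \<Longrightarrow> state_cost u \<in> borel_measurable \<mu>"
  using continuous_on_if_lipschitz_on_cballs[OF state_cost_lipschitz_on_cball]
  by (auto simp: measurable_cong_sets[OF sets_\<mu> refl] intro: borel_measurable_continuous_onI)

lemma state_cost_stability:
  "\<exists>C. \<forall>u\<in>Uad T. \<forall>v\<in>Uad T.
    \<bar>state_cost u \<theta> - state_cost v \<theta>\<bar> \<le> C * integral {0..T} (\<lambda>s. norm (u s - v s))"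
proof -
  interpret control_affine_field T f0 f \<theta> by (rule fields)
  obtain C where C: "\<forall>u v x y. u \<in> Uad T \<longrightarrow> v \<in> Uad T \<longrightarrow>
      is_trajectory T f0 f u \<theta> x \<longrightarrow> is_trajectory T f0 f v \<theta> y \<longrightarrow>
      (\<forall>s\<in>{0..T}. norm (x s) \<le> a \<theta> \<and> norm (y s) \<le> a \<theta>) \<longrightarrow>
      (\<forall>t\<in>{0..T}. norm (x t - y t) \<le> C * integral {0..T} (\<lambda>s. norm (u s - v s)))"
    using trajectory_stability[where R="a \<theta>"] by blast
  have "\<bar>state_cost u \<theta> - state_cost v \<theta>\<bar> \<le> T * (2 * a \<theta> * (C * integral {0..T} (\<lambda>s. norm (u s - v s))))"
    if u: "u \<in> Uad T" and v: "v \<in> Uad T" for u v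
    unfolding state_cost_def
  proof (rule integral_abs_diff_le[OF traj_sq_integrable[OF u] traj_sq_integrable[OF v]])
    fix t assume t: "t \<in> {0..T}"
    have "\<bar>(norm (traj T f0 f u \<theta> t))\<^sup>2 - (norm (traj T f0 f v \<theta> t))\<^sup>2\<bar>
        \<le> 2 * a \<theta> * norm (traj T f0 f u \<theta> t - traj T f0 f v \<theta> t)"
      by (intro abs_norm_sq_diff_le traj_le_a u v t)
    also have "\<dots> \<le> 2 * a \<theta> * (C * integral {0..T} (\<lambda>s. norm (u s - v s)))"
      using C u v t traj_is_trajectory traj_le_a order_trans[OF norm_ge_zero traj_le_a[OF u t]]
      by (intro mult_left_mono) auto
    finally show "\<bar>(norm (traj T f0 f u \<theta> t))\<^sup>2 - (norm (traj T f0 f v \<theta> t))\<^sup>2\<bar>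
        \<le> 2 * a \<theta> * (C * integral {0..T} (\<lambda>s. norm (u s - v s)))" .
  qed (use T_pos in simp)
  then show ?thesis by (intro exI[of _ "T * (2 * a \<theta> * C)"]) (simp add: algebra_simps)
qed

lemma Ecost_tendsto:
  assumes u: "\<And>k. u k \<in> Uad T" and v: "v \<in> Uad T"
    and L1: "(\<lambda>k. integral {0..T} (\<lambda>s. norm (u k s - v s))) \<longlonglongrightarrow> 0"
  shows "(\<lambda>k. Ecost T f0 f \<mu> (u k)) \<longlonglongrightarrow> Ecost T f0 f \<mu> v"
  unfolding Ecost_eq_integral_state_cost
proof (rule integral_dominated_convergence[where w = "\<lambda>\<theta>. T * (a \<theta>)\<^sup>2"])
  show "state_cost v \<in> borel_measurable \<mu>" "state_cost (u k) \<in> borel_measurable \<mu>" for k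
    using u v by (auto intro: state_cost_measurable)
  show "integrable \<mu> (\<lambda>\<theta>. T * (a \<theta>)\<^sup>2)" using a_L2 by simp
  show "AE \<theta> in \<mu>. norm (state_cost (u k) \<theta>) \<le> T * (a \<theta>)\<^sup>2" for k
    using state_cost_nonneg[OF u] state_cost_le[OF u] by (intro AE_I2) simp
  show "AE \<theta> in \<mu>. (\<lambda>k. state_cost (u k) \<theta>) \<longlonglongrightarrow> state_cost v \<theta>"
  proof (rule AE_I2)
    fix \<theta>
    obtain C where C: "\<And>k. \<bar>state_cost (u k) \<theta> - state_cost v \<theta>\<bar> \<le> C * integral {0..T} (\<lambda>s. norm (u k s - v s))"
      using state_cost_stability[of \<theta>] u v by blast
    have "(\<lambda>k. state_cost (u k) \<theta> - state_cost v \<theta>) \<longlonglongrightarrow> 0"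
      using C by (intro Lim_null_comparison[OF always_eventually tendsto_mult_right_zero[OF L1, where c=C]]) simp
    then show "(\<lambda>k. state_cost (u k) \<theta>) \<longlonglongrightarrow> state_cost v \<theta>" by (rule LIM_zero_cancel)
  qed
qed

abbreviation J where "J \<equiv> Jfun T \<alpha> \<psi> f0 f ut \<eta>"

definition sq_dist_L2 :: "(real \<Rightarrow> real^'m) \<Rightarrow> (real \<Rightarrow> real^'m) \<Rightarrow> real" where
  "sq_dist_L2 u v = integral {0..T} (\<lambda>t. (norm (u t - v t))\<^sup>2)"

definition midpoint_control :: "(real \<Rightarrow> real^'m) \<Rightarrow> (real \<Rightarrow> real^'m) \<Rightarrow> real \<Rightarrow> real^'m" where
  "midpoint_control u v = (\<lambda>t. (1/2::real) *\<^sub>R u t + (1 - 1/2) *\<^sub>R v t)"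

lemma J_eq:
  "J \<nu> u = - integral {0..T} (\<lambda>t. \<psi> t \<bullet> u t) + \<alpha> * Ecost T f0 f \<nu> u + \<eta> / 2 * sq_dist_L2 u ut"
  unfolding Jfun_def sq_dist_L2_def ..

lemma sq_dist_L2_nonneg: "u \<in> Uad T \<Longrightarrow> v \<in> Uad T \<Longrightarrow> 0 \<le> sq_dist_L2 u v"
  unfolding sq_dist_L2_def by (rule integral_nonneg[OF Uad_sq_diff_integrable]) auto

lemma sq_dist_L2_tendsto:
  assumes "\<And>k. u k \<in> Uad T" "v \<in> Uad T" "w \<in> Uad T"
    and "AE t in lebesgue_on {0..T}. (\<lambda>k. u k t) \<longlonglongrightarrow> v t"
  shows "(\<lambda>k. sq_dist_L2 (u k) w) \<longlonglongrightarrow> sq_dist_L2 v w"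
  unfolding sq_dist_L2_def
proof (rule integral_tendsto_if_ae_tendsto_bounded[where B="(2 * real CARD('m))\<^sup>2"])
  show "(\<lambda>t. (norm (u k t - w t))\<^sup>2) \<in> borel_measurable (lebesgue_on {0..T})" for k
    by (rule Uad_sq_diff_measurable[OF assms(1,3)])
  show "norm ((norm (u k t - w t))\<^sup>2) \<le> (2 * real CARD('m))\<^sup>2" if "t \<in> {0..T}" for k t
    by (rule Uad_sq_diff_le[OF assms(1,3) that])
  show "(\<lambda>t. (norm (v t - w t))\<^sup>2) \<in> borel_measurable (lebesgue_on {0..T})"
    by (rule Uad_sq_diff_measurable[OF assms(2,3)])
  show "AE t in lebesgue_on {0..T}. (\<lambda>k. (norm (u k t - w t))\<^sup>2) \<longlonglongrightarrow> (norm (v t - w t))\<^sup>2"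
    using assms(4) by (rule eventually_mono) (intro tendsto_intros)
qed

lemma pairing_measurable:
  assumes "u \<in> Uad T"
  shows "(\<lambda>t. \<psi> t \<bullet> u t) \<in> borel_measurable (lebesgue_on {0..T})"
proof -
  have "\<psi> \<in> borel_measurable (lebesgue_on {0..T})"
    by (rule continuous_imp_measurable_on_sets_lebesgue[OF \<psi>_cont]) auto
  then show ?thesis using Uad_measurable[OF assms] by measurable
qed

lemma pairing_bounded: "\<exists>B. \<forall>u\<in>Uad T. \<forall>t\<in>{0..T}. norm (\<psi> t \<bullet> u t) \<le> B"
proof -
  have "bounded (\<psi> ` {0..T})" by (intro compact_imp_bounded compact_continuous_image \<psi>_cont) simp
  then obtain M where M: "\<And>t. t \<in> {0..T} \<Longrightarrow> norm (\<psi> t) \<le> M" by (meson bounded_iff imageI)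
  have "norm (\<psi> t \<bullet> u t) \<le> M * CARD('m)" if "u \<in> Uad T" "t \<in> {0..T}" for u t
  proof -
    have "norm (\<psi> t \<bullet> u t) \<le> norm (\<psi> t) * norm (u t)" by (simp add: Cauchy_Schwarz_ineq2)
    also have "\<dots> \<le> M * CARD('m)"
      using M[OF that(2)] Uad_norm_le[OF that] order_trans[OF norm_ge_zero M[OF that(2)]]
      by (intro mult_mono) auto
    finally show ?thesis .
  qed
  then show ?thesis by blast
qed

lemma pairing_integrable:
  assumes "u \<in> Uad T"
  shows "(\<lambda>t. \<psi> t \<bullet> u t) integrable_on {0..T}"
proof -
  obtain B where "\<forall>u\<in>Uad T. \<forall>t\<in>{0..T}. norm (\<psi> t \<bullet> u t) \<le> B" using pairing_bounded by blast
  then show ?thesis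
    using assms by (intro measurable_bounded_imp_integrable_on[where B=B] pairing_measurable) auto
qed

lemma pairing_tendsto:
  assumes "\<And>k. u k \<in> Uad T" "v \<in> Uad T"
    and "AE t in lebesgue_on {0..T}. (\<lambda>k. u k t) \<longlonglongrightarrow> v t"
  shows "(\<lambda>k. integral {0..T} (\<lambda>t. \<psi> t \<bullet> u k t)) \<longlonglongrightarrow> integral {0..T} (\<lambda>t. \<psi> t \<bullet> v t)"
proof -
  obtain B where B: "\<forall>u\<in>Uad T. \<forall>t\<in>{0..T}. norm (\<psi> t \<bullet> u t) \<le> B" using pairing_bounded by blast
  show ?thesis
  proof (rule integral_tendsto_if_ae_tendsto_bounded[where B=B])
    show "norm (\<psi> t \<bullet> u k t) \<le> B" if "t \<in> {0..T}" for k t using B assms(1) that by blast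
    show "AE t in lebesgue_on {0..T}. (\<lambda>k. \<psi> t \<bullet> u k t) \<longlonglongrightarrow> \<psi> t \<bullet> v t"
      using assms(3) by (rule eventually_mono) (intro tendsto_intros)
  qed (intro pairing_measurable assms)+
qed

lemma midpoint_control_in_Uad:
  assumes u: "u \<in> Uad T" and v: "v \<in> Uad T"
  shows "midpoint_control u v \<in> Uad T"
proof -
  have "midpoint_control u v \<in> borel_measurable (lebesgue_on {0..T})"
    unfolding midpoint_control_def using Uad_measurable[OF u] Uad_measurable[OF v] by measurable
  moreover have "\<bar>midpoint_control u v t $ i\<bar> \<le> 1" if "t \<in> {0..T}" for t i
  proof -
    have "\<bar>u t $ i\<bar> \<le> 1" "\<bar>v t $ i\<bar> \<le> 1" using u v that unfolding Uad_def by auto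
    then show ?thesis unfolding midpoint_control_def by simp
  qed
  ultimately show ?thesis unfolding Uad_def by auto
qed

lemma norm_midpoint_diff_sq:
  fixes x y z :: "'a::real_inner"
  shows "(norm ((1/2::real) *\<^sub>R x + (1 - 1/2) *\<^sub>R y - z))\<^sup>2
    = (1/2) * (norm (x - z))\<^sup>2 + (1/2) * (norm (y - z))\<^sup>2 - (1/4) * (norm (x - y))\<^sup>2"
  by (simp add: power2_norm_eq_inner inner_diff_left inner_diff_right inner_add_left inner_add_right
      inner_commute algebra_simps)

lemma J_midpoint_le:
  assumes u: "u \<in> Uad T" and v: "v \<in> Uad T"
  shows "J \<mu> (midpoint_control u v) \<le> (J \<mu> u + J \<mu> v) / 2 - \<eta> / 8 * sq_dist_L2 u v"
proof -
  have linear: "integral {0..T} (\<lambda>t. \<psi> t \<bullet> midpoint_control u v t)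
      = (1/2) * integral {0..T} (\<lambda>t. \<psi> t \<bullet> u t) + (1/2) * integral {0..T} (\<lambda>t. \<psi> t \<bullet> v t)"
    unfolding midpoint_control_def using pairing_integrable[OF u] pairing_integrable[OF v]
    by (simp add: inner_add_right integral_add)
  have quadratic: "sq_dist_L2 (midpoint_control u v) ut
      = (1/2) * sq_dist_L2 u ut + (1/2) * sq_dist_L2 v ut - (1/4) * sq_dist_L2 u v"
  proof -
    have "((\<lambda>t. (1/2) * (norm (u t - ut t))\<^sup>2 + (1/2) * (norm (v t - ut t))\<^sup>2 - (1/4) * (norm (u t - v t))\<^sup>2)
        has_integral (1/2) * sq_dist_L2 u ut + (1/2) * sq_dist_L2 v ut - (1/4) * sq_dist_L2 u v) {0..T}"
      unfolding sq_dist_L2_def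
      by (intro has_integral_add has_integral_diff has_integral_mult_right integrable_integral
          Uad_sq_diff_integrable u v ut_adm)
    then show ?thesis
      unfolding sq_dist_L2_def midpoint_control_def norm_midpoint_diff_sq by (simp add: integral_unique)
  qed
  have "Ecost T f0 f \<mu> (midpoint_control u v) \<le> (1/2) * Ecost T f0 f \<mu> u + (1 - 1/2) * Ecost T f0 f \<mu> v"
    unfolding midpoint_control_def by (rule Ecost_convex[OF u v]) auto
  then have "\<alpha> * Ecost T f0 f \<mu> (midpoint_control u v)
      \<le> \<alpha> * ((1/2) * Ecost T f0 f \<mu> u + (1 - 1/2) * Ecost T f0 f \<mu> v)"
    using \<alpha>_pos by (intro mult_left_mono) auto
  then show ?thesis unfolding J_eq linear quadratic by (simp add: field_simps)
qed

lemma J_tendsto: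
  assumes u: "\<And>k. u k \<in> Uad T" and v: "v \<in> Uad T"
    and ae: "AE t in lebesgue_on {0..T}. (\<lambda>k. u k t) \<longlonglongrightarrow> v t"
  shows "(\<lambda>k. J \<mu> (u k)) \<longlonglongrightarrow> J \<mu> v"
proof -
  have "(\<lambda>k. integral {0..T} (\<lambda>s. norm (u k s - v s))) \<longlonglongrightarrow> integral {0..T} (\<lambda>s. 0::real)"
  proof (rule integral_tendsto_if_ae_tendsto_bounded[where B = "2 * real CARD('m)"])
    show "(\<lambda>s. norm (u k s - v s)) \<in> borel_measurable (lebesgue_on {0..T})" for k
      using Uad_measurable[OF u] Uad_measurable[OF v] by measurable
    show "norm (norm (u k t - v t)) \<le> 2 * real CARD('m)" if "t \<in> {0..T}" for k t
      using Uad_norm_diff_le[OF u v that] by simp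
    show "AE t in lebesgue_on {0..T}. (\<lambda>k. norm (u k t - v t)) \<longlonglongrightarrow> 0"
      using ae by (rule eventually_mono) (intro tendsto_norm_zero, simp add: LIM_zero)
  qed simp
  then have "(\<lambda>k. Ecost T f0 f \<mu> (u k)) \<longlonglongrightarrow> Ecost T f0 f \<mu> v"
    by (intro Ecost_tendsto u v) simp
  then show ?thesis
    unfolding J_eq by (intro tendsto_intros pairing_tendsto[OF u v ae] sq_dist_L2_tendsto[OF u v ut_adm ae])
qed

lemma J_bounded_below: "\<exists>m. \<forall>u\<in>Uad T. m \<le> J \<mu> u"
proof -
  obtain B where B: "\<forall>u\<in>Uad T. \<forall>t\<in>{0..T}. norm (\<psi> t \<bullet> u t) \<le> B" using pairing_bounded by blast
  have "- (T * B) \<le> J \<mu> u" if u: "u \<in> Uad T" for u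
  proof -
    have "norm (integral {0..T} (\<lambda>t. \<psi> t \<bullet> u t)) \<le> integral {0..T} (\<lambda>t. B)"
      using B u by (intro integral_norm_bound_integral pairing_integrable) auto
    then have "integral {0..T} (\<lambda>t. \<psi> t \<bullet> u t) \<le> T * B" using T_pos by simp
    moreover have "0 \<le> Ecost T f0 f \<mu> u"
      unfolding Ecost_eq_integral_state_cost using state_cost_nonneg[OF u] by (simp add: integral_nonneg_AE)
    then have "0 \<le> \<alpha> * Ecost T f0 f \<mu> u" using \<alpha>_pos by simp
    moreover have "0 \<le> \<eta> / 2 * sq_dist_L2 u ut" using sq_dist_L2_nonneg[OF u ut_adm] \<eta>_pos by simp
    ultimately show ?thesis unfolding J_eq by linarith
  qed
  then show ?thesis by blast
qed

lemma sq_dist_L2_le_if_lower_bound: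
  assumes "u \<in> Uad T" "v \<in> Uad T" and lower: "\<And>w. w \<in> Uad T \<Longrightarrow> m \<le> J \<mu> w"
  shows "\<eta> / 8 * sq_dist_L2 u v \<le> (J \<mu> u + J \<mu> v) / 2 - m"
  using J_midpoint_le[OF assms(1,2)] lower[OF midpoint_control_in_Uad[OF assms(1,2)]] by linarith

lemma minimizing_sequence_L2_Cauchy:
  assumes u: "\<And>k. u k \<in> Uad T" and lower: "\<And>w. w \<in> Uad T \<Longrightarrow> m \<le> J \<mu> w"
    and minimizing: "\<And>k. J \<mu> (u k) < m + inverse (Suc k)"
    and e: "0 < e"
  shows "\<exists>N. \<forall>i\<ge>N. \<forall>j\<ge>N. sq_dist_L2 (u i) (u j) < e"
proof -
  obtain N where N: "inverse (Suc N) < \<eta> * e / 8"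
    using reals_Archimedean[of "\<eta> * e / 8"] e \<eta>_pos by auto
  have "sq_dist_L2 (u i) (u j) < e" if "N \<le> i" "N \<le> j" for i j
  proof -
    have "inverse (Suc i) \<le> inverse (Suc N)" "inverse (Suc j) \<le> inverse (Suc N)"
      using that by (auto intro!: le_imp_inverse_le)
    moreover have "(x + y) / 2 - m < c" if "x < m + a" "y < m + b" "a \<le> c" "b \<le> c" for x y a b c :: real
      using that by (simp add: field_simps)
    ultimately have average: "(J \<mu> (u i) + J \<mu> (u j)) / 2 - m < inverse (Suc N)"
      using minimizing[of i] minimizing[of j] by blast
    have "\<eta> / 8 * sq_dist_L2 (u i) (u j) \<le> (J \<mu> (u i) + J \<mu> (u j)) / 2 - m"
      by (rule sq_dist_L2_le_if_lower_bound[OF u u lower])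
    also note average
    also note N
    finally have "\<eta> * sq_dist_L2 (u i) (u j) < \<eta> * e" by simp
    then show ?thesis using \<eta>_pos by simp
  qed
  then show ?thesis by blast
qed

lemma minimizer_exists: "\<exists>v. is_minimizer (Uad T) (J \<mu>) v"
proof -
  define m where "m = Inf (J \<mu> ` Uad T)"
  have nonempty: "J \<mu> ` Uad T \<noteq> {}" using ut_adm by auto
  have bdd: "bdd_below (J \<mu> ` Uad T)" unfolding bdd_below_def using J_bounded_below by blast
  have lower: "m \<le> J \<mu> w" if "w \<in> Uad T" for w
    unfolding m_def by (rule cInf_lower[OF _ bdd]) (use that in auto)
  have "\<exists>v \<in> Uad T. J \<mu> v < m + inverse (Suc k)" for k
    using cInf_lessD[OF nonempty, of "m + inverse (Suc k)"] unfolding m_def by auto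
  then obtain u where u: "\<And>k. u k \<in> Uad T" and minimizing: "\<And>k. J \<mu> (u k) < m + inverse (Suc k)"
    by metis
  have "\<exists>N. \<forall>i\<ge>N. \<forall>j\<ge>N. integral {0..T} (\<lambda>t. (norm (u i t - u j t))\<^sup>2) < e" if "0 < e" for e
    using minimizing_sequence_L2_Cauchy[where u=u and m=m, OF u lower minimizing that]
    unfolding sq_dist_L2_def .
  then obtain r v where r: "strict_mono r" and v: "v \<in> Uad T"
    and ae: "AE t in lebesgue_on {0..T}. (\<lambda>k. u (r k) t) \<longlonglongrightarrow> v t"
    using Uad_L2_Cauchy_imp_ae_convergent_subseq[where u=u, OF T_pos u] by blast
  have "(\<lambda>k. J \<mu> (u (r k))) \<longlonglongrightarrow> J \<mu> v" by (rule J_tendsto[OF u v ae])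
  moreover have "(\<lambda>k. m + inverse (real (Suc (r k)))) \<longlonglongrightarrow> m + 0"
    by (intro tendsto_add tendsto_const LIMSEQ_subseq_LIMSEQ[OF LIMSEQ_inverse_real_of_nat r, unfolded o_def])
  ultimately have "J \<mu> v \<le> m + 0"
    by (rule LIMSEQ_le) (use minimizing less_imp_le in blast)
  then show ?thesis using v lower unfolding is_minimizer_def by force
qed

lemma minimizer_unique:
  assumes v: "is_minimizer (Uad T) (J \<mu>) v" and w: "is_minimizer (Uad T) (J \<mu>) w"
  shows "AE t in lebesgue_on {0..T}. w t = v t"
proof -
  have vU: "v \<in> Uad T" and wU: "w \<in> Uad T" and lower: "\<And>x. x \<in> Uad T \<Longrightarrow> J \<mu> v \<le> J \<mu> x"
    using v w by (auto simp: is_minimizer_def)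
  have "J \<mu> w = J \<mu> v" using lower[OF wU] w vU by (auto simp: is_minimizer_def intro: antisym)
  then have "\<eta> / 8 * sq_dist_L2 w v \<le> 0" using sq_dist_L2_le_if_lower_bound[OF wU vU lower] by simp
  then have "sq_dist_L2 w v = 0" using sq_dist_L2_nonneg[OF wU vU] \<eta>_pos by (simp add: mult_le_0_iff)
  then have "integral\<^sup>L (lebesgue_on {0..T}) (\<lambda>t. (norm (w t - v t))\<^sup>2) = 0"
    using lebesgue_on_interval_integrable_bounded(2)[OF Uad_sq_diff_measurable[OF wU vU] Uad_sq_diff_le[OF wU vU]]
    unfolding sq_dist_L2_def by simp
  then have "AE t in lebesgue_on {0..T}. (norm (w t - v t))\<^sup>2 = 0"
    using integral_nonneg_eq_0_iff_AE[OF lebesgue_on_interval_integrable_bounded(1)[OF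
        Uad_sq_diff_measurable[OF wU vU] Uad_sq_diff_le[OF wU vU]]] by simp
  then show ?thesis by (rule eventually_mono) simp
qed

lemma approximate_minimizers_tendsto:
  fixes \<mu>N :: "nat \<Rightarrow> (real^'p) measure"
  assumes approx: "\<And>uN. (\<And>N. uN N \<in> Uad T) \<Longrightarrow> (\<lambda>N. J (\<mu>N N) (uN N) - J \<mu> (uN N)) \<longlonglongrightarrow> 0"
    and v: "is_minimizer (Uad T) (J \<mu>) v"
    and uN: "\<And>N. N \<ge> 1 \<Longrightarrow> is_minimizer (Uad T) (J (\<mu>N N)) (uN N)"
  shows "(\<lambda>N. sq_dist_L2 (uN N) v) \<longlonglongrightarrow> 0"
proof -
  have vU: "v \<in> Uad T" and lower: "\<And>w. w \<in> Uad T \<Longrightarrow> J \<mu> v \<le> J \<mu> w"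
    using v by (auto simp: is_minimizer_def)
  \<comment> \<open>\<open>uN 0\<close> is unconstrained, so the approximation hypothesis is applied to a patched sequence.\<close>
  define wN where "wN N = (if 1 \<le> N then uN N else v)" for N
  have wN: "wN N \<in> Uad T" for N using uN vU by (auto simp: wN_def is_minimizer_def)
  define e where "e N = (J (\<mu>N N) v - J \<mu> v) - (J (\<mu>N N) (wN N) - J \<mu> (wN N))" for N
  have "e \<longlonglongrightarrow> 0 - 0"
    unfolding e_def using vU by (intro tendsto_diff approx wN)
  then have e: "(\<lambda>N. 4 / \<eta> * e N) \<longlonglongrightarrow> 0" by (intro tendsto_mult_right_zero) simp
  have "0 \<le> sq_dist_L2 (uN N) v \<and> sq_dist_L2 (uN N) v \<le> 4 / \<eta> * e N" if N: "N \<ge> 1" for N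
  proof -
    have uNU: "uN N \<in> Uad T" and "J (\<mu>N N) (uN N) \<le> J (\<mu>N N) v"
      using uN[OF N] vU by (auto simp: is_minimizer_def)
    then have "J \<mu> (uN N) - J \<mu> v \<le> e N" using N unfolding e_def wN_def by simp
    moreover have "\<eta> / 8 * sq_dist_L2 (uN N) v \<le> (J \<mu> (uN N) + J \<mu> v) / 2 - J \<mu> v"
      by (rule sq_dist_L2_le_if_lower_bound[OF uNU vU lower])
    ultimately have "\<eta> * sq_dist_L2 (uN N) v \<le> 4 * e N" by simp
    then show ?thesis using \<eta>_pos sq_dist_L2_nonneg[OF uNU vU] by (simp add: field_simps)
  qed
  then show ?thesis
    by (intro tendsto_sandwich[OF _ _ tendsto_const e] eventually_mono[OF eventually_ge_at_top[of 1]]) auto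
qed

end


theorem mainTheorem11:
  fixes T \<alpha> \<eta> :: real
    and \<psi> :: "real \<Rightarrow> real^'m"
    and \<theta>prior :: "real^'p" and \<Sigma>prior :: "real^'p^'p"
    and f0 :: "real^'p \<Rightarrow> real^'n \<Rightarrow> real^'n"
    and f :: "'m \<Rightarrow> real^'p \<Rightarrow> real^'n \<Rightarrow> real^'n"
    and a b :: "real^'p \<Rightarrow> real"
    and \<mu>N :: "nat \<Rightarrow> (real^'p) measure"
    and ut :: "real \<Rightarrow> real^'m"
  defines "\<mu> \<equiv> gaussian_measure \<theta>prior \<Sigma>prior"
  assumes T_pos: "T > 0" and \<alpha>_pos: "\<alpha> > 0"
    and \<psi>_cont: "continuous_on {0..T} \<psi>"
    and \<Sigma>_sym: "transpose \<Sigma>prior = \<Sigma>prior"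
    and \<Sigma>_pd: "\<And>v. v \<noteq> 0 \<Longrightarrow> v \<bullet> (\<Sigma>prior *v v) > 0"
    \<comment> \<open>(A1)\<close>
    and A1_smooth0: "smooth (\<lambda>z::(real^'p) \<times> (real^'n). f0 (fst z) (snd z))"
    and A1_smooth: "\<And>i. smooth (\<lambda>z::(real^'p) \<times> (real^'n). f i (fst z) (snd z))"
    and A1_growth: "\<And>\<theta>. \<exists>c. \<forall>x. norm (f0 \<theta> x) \<le> c * (1 + norm x) \<and>
                              (\<forall>i. norm (f i \<theta> x) \<le> c * (1 + norm x))"
    \<comment> \<open>(A2)\<close>
    and A2_a_meas: "a \<in> borel_measurable borel"
    and A2_a_L2: "integrable \<mu> (\<lambda>\<theta>. (a \<theta>)\<^sup>2)"
    and A2_a_loc: "\<And>K. compact K \<Longrightarrow> bounded (a ` K)"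
    and A2_b_meas: "b \<in> borel_measurable borel"
    and A2_b_loc: "\<And>K. compact K \<Longrightarrow> bounded (b ` K)"
    and A2_x: "\<And>u t \<theta>. u \<in> Uad T \<Longrightarrow> t \<in> {0..T} \<Longrightarrow>
                 norm (traj T f0 f u \<theta> t) \<le> a \<theta>"
    and A2_dx: "\<And>u t \<theta> i. u \<in> Uad T \<Longrightarrow> t \<in> {0..T} \<Longrightarrow>
                 \<exists>d. ((\<lambda>s. traj T f0 f u (\<theta> + s *\<^sub>R axis i 1) t) has_vector_derivative d) (at 0)
                     \<and> norm d \<le> b \<theta>"
    \<comment> \<open>(A3)\<close>
    and A3: "\<And>u v l. u \<in> Uad T \<Longrightarrow> v \<in> Uad T \<Longrightarrow> l \<in> {0..1} \<Longrightarrow>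
               Ecost T f0 f \<mu> (\<lambda>t. l *\<^sub>R u t + (1 - l) *\<^sub>R v t)
                 \<le> l * Ecost T f0 f \<mu> u + (1 - l) * Ecost T f0 f \<mu> v"
    and approx: "approx_seq T \<alpha> \<psi> f0 f \<mu> \<mu>N"
    and \<eta>_pos: "\<eta> > 0"
    and ut_adm: "ut \<in> Uad T"
  shows "\<exists>ubar. is_minimizer (Uad T) (Jfun T \<alpha> \<psi> f0 f ut \<eta> \<mu>) ubar \<and>
           (\<forall>v. is_minimizer (Uad T) (Jfun T \<alpha> \<psi> f0 f ut \<eta> \<mu>) v \<longrightarrow>
                 (AE t in lebesgue_on {0..T}. v t = ubar t)) \<and>
           (\<forall>uN. (\<forall>N\<ge>1. is_minimizer (Uad T) (Jfun T \<alpha> \<psi> f0 f ut \<eta> (\<mu>N N)) (uN N)) \<longrightarrow>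
                 ((\<lambda>N. sqrt (integral {0..T} (\<lambda>t. (norm (uN N t - ubar t))\<^sup>2))) \<longlonglongrightarrow> 0))"
proof -
  have fields: "control_affine_field T f0 f \<theta>" for \<theta>
    by (rule control_affine_field_if_smooth[OF T_pos A1_smooth0 A1_smooth A1_growth])
  have "sets \<mu> = sets borel" unfolding \<mu>_def gaussian_measure_def by simp
  with T_pos \<alpha>_pos \<eta>_pos \<psi>_cont ut_adm fields A2_a_L2 A2_a_loc A2_b_loc A2_x A2_dx A3
  interpret optimal_control_problem T \<alpha> \<eta> \<psi> f0 f a b ut \<mu>
    by (intro optimal_control_problem.intro)
  obtain ubar where ubar: "is_minimizer (Uad T) (J \<mu>) ubar" using minimizer_exists by blast
  have approx_J: "(\<lambda>N. J (\<mu>N N) (uN N) - J \<mu> (uN N)) \<longlonglongrightarrow> 0" if "\<And>N. uN N \<in> Uad T" for uN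
    using approx \<eta>_pos ut_adm that unfolding approx_seq_def by auto
  have "(\<lambda>N. sqrt (sq_dist_L2 (uN N) ubar)) \<longlonglongrightarrow> 0"
    if "\<forall>N\<ge>1. is_minimizer (Uad T) (J (\<mu>N N)) (uN N)" for uN
    using tendsto_real_sqrt[OF approximate_minimizers_tendsto[OF approx_J ubar]] that by simp
  then show ?thesis
    using ubar minimizer_unique[OF ubar] unfolding sq_dist_L2_def by blast
qed

end
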